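(* Let $K=K(p,q)$ be a 2-bridge knot. For any $n\in\mathbb{Z},$ the fundamental group $\pi_1(S^3_{n}(K))$ admits a non-trivial $SL(2, \mathbb{R})$ representation if the system of equations $$A_{p,q}(t, u) = (t - t^{-1}) B_{p,q}(t, u),\qquad t^{n-2\sigma}((t-t^{-1})^2-u)\left(B_{p,q}(t, u)\right)^2=1$$ has a solution $(t, u)\in\mathbb{R}^2$ with $t\notin\{-1, 0, 1\}$ or a solution with $t=e^{i\theta}, t\neq\pm1$ and $u\in(-\infty, -4\sin^2(\theta))\cup(0,\infty),$ or if $n$ is odd and the system of equations $$A_{p,q}(-1, u) = 0,\qquad -(n-2\sigma)uB_{p,q}(-1, u) = 2D_{p,q}(-1, u)$$ has a solution $u\in\mathbb{R}.$ Moreover, if $n=\pm1,$ then the existence of a solution of one of the kinds just listed (a solution of the first system with $(t,u)\in\mathbb{R}^2$, $t\notin\{-1,0,1\}$, or with $t=e^{i\theta}$, $t\neq\pm1$, $u\in(-\infty, -4\sin^2(\theta))\cup(0,\infty)$; or, $n$ being odd, a real solution $u$ of the second system) is a necessary and sufficient condition for $\pi_1(S^3_{n}(K))$ to admit a non-trivial $SL(2, \mathbb{R})$ representation.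
   Context: A 2-bridge knot is written $K(p,q)$ with $p,q$ odd integers and $q\in(-p,p)$. For $1\le i\le p$ let $e_i = (-1)^{\lfloor iq/p\rfloor}$ and $\sigma = \sum_{i=1}^{p-1} e_i$. For $t,u\in\mathbb{C}$, $t\neq 0$, let $C = \begin{pmatrix} t & 1 \\ 0 & t^{-1}\end{pmatrix}$, $D = \begin{pmatrix} t & 0 \\ -u & t^{-1}\end{pmatrix}$, and $W = C^{e_1}D^{e_2}\cdots C^{e_{p-2}}D^{e_{p-1}} = \begin{pmatrix} a & b \\ c & d\end{pmatrix}$. Then $A_{p,q}(t,u)$, $B_{p,q}(t,u)$, $D_{p,q}(t,u)\in\mathbb{Z}[t,t^{-1},u]$ denote the entries $a$, $b$, $d$ of $W$ respectively. $S^3_n(K)$ denotes $n$-framed Dehn surgery on $K$. The knot group has presentation $\langle x,y\mid wx=yw\rangle$ with $w=x^{e_1}y^{e_2}\cdots x^{e_{p-2}}y^{e_{p-1}}$, meridian $x$, and the representations considered send $x\mapsto C$, $y\mapsto D$. *)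

theory Defs
  imports Complex_Main
begin

datatype 'a m2 = M2 'a 'a 'a 'a

fun m2mul :: "'a::comm_ring_1 m2 \<Rightarrow> 'a m2 \<Rightarrow> 'a m2" where
  "m2mul (M2 a b c d) (M2 a' b' c' d') =
     M2 (a*a' + b*c') (a*b' + b*d') (c*a' + d*c') (c*b' + d*d')"

definition m2id :: "'a::comm_ring_1 m2" where "m2id = M2 1 0 0 1"

fun m2det :: "'a::comm_ring_1 m2 \<Rightarrow> 'a" where
  "m2det (M2 a b c d) = a*d - b*c"

text \<open>Adjugate; equals the inverse for matrices of determinant 1.\<close>
fun m2adj :: "'a::comm_ring_1 m2 \<Rightarrow> 'a m2" where
  "m2adj (M2 a b c d) = M2 d (-b) (-c) a"

fun m2pow :: "'a::comm_ring_1 m2 \<Rightarrow> nat \<Rightarrow> 'a m2" where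
  "m2pow M 0 = m2id"
| "m2pow M (Suc k) = m2mul (m2pow M k) M"

definition m2zpow :: "'a::comm_ring_1 m2 \<Rightarrow> int \<Rightarrow> 'a m2" where
  "m2zpow M k = (if 0 \<le> k then m2pow M (nat k) else m2pow (m2adj M) (nat (-k)))"

fun m2_a :: "'a m2 \<Rightarrow> 'a" where "m2_a (M2 a b c d) = a"
fun m2_b :: "'a m2 \<Rightarrow> 'a" where "m2_b (M2 a b c d) = b"
fun m2_d :: "'a m2 \<Rightarrow> 'a" where "m2_d (M2 a b c d) = d"

text \<open>e_i = (-1)^floor(i q / p); for p > 0, integer div is floor division.\<close>
definition eps :: "int \<Rightarrow> int \<Rightarrow> int \<Rightarrow> int" where
  "eps p q i = (if even ((i * q) div p) then 1 else -1)"

definition sigma :: "int \<Rightarrow> int \<Rightarrow> int" where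
  "sigma p q = (\<Sum>i\<in>{1..p-1}. eps p q i)"

definition wfactor :: "int \<Rightarrow> int \<Rightarrow> 'a::comm_ring_1 m2 \<Rightarrow> 'a m2 \<Rightarrow> int \<Rightarrow> 'a m2" where
  "wfactor p q X Y i = m2zpow (if odd i then X else Y) (eps p q i)"

text \<open>w = x^{e_1} y^{e_2} ... x^{e_{p-2}} y^{e_{p-1}} evaluated at (X,Y).\<close>
definition wordW :: "int \<Rightarrow> int \<Rightarrow> 'a::comm_ring_1 m2 \<Rightarrow> 'a m2 \<Rightarrow> 'a m2" where
  "wordW p q X Y = foldl (\<lambda>M i. m2mul M (wfactor p q X Y i)) m2id [1..p-1]"

definition wordWrev :: "int \<Rightarrow> int \<Rightarrow> 'a::comm_ring_1 m2 \<Rightarrow> 'a m2 \<Rightarrow> 'a m2" where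
  "wordWrev p q X Y = foldl (\<lambda>M i. m2mul M (wfactor p q X Y i)) m2id (rev [1..p-1])"

definition matC :: "'a::field \<Rightarrow> 'a m2" where "matC t = M2 t 1 0 (inverse t)"
definition matD :: "'a::field \<Rightarrow> 'a \<Rightarrow> 'a m2" where "matD t u = M2 t 0 (-u) (inverse t)"

definition Apq :: "int \<Rightarrow> int \<Rightarrow> 'a::field \<Rightarrow> 'a \<Rightarrow> 'a" where
  "Apq p q t u = m2_a (wordW p q (matC t) (matD t u))"
definition Bpq :: "int \<Rightarrow> int \<Rightarrow> 'a::field \<Rightarrow> 'a \<Rightarrow> 'a" where
  "Bpq p q t u = m2_b (wordW p q (matC t) (matD t u))"
definition Dpq :: "int \<Rightarrow> int \<Rightarrow> 'a::field \<Rightarrow> 'a \<Rightarrow> 'a" where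
  "Dpq p q t u = m2_d (wordW p q (matC t) (matD t u))"

definition two_bridge :: "int \<Rightarrow> int \<Rightarrow> bool" where
  "two_bridge p q \<longleftrightarrow> 0 < p \<and> odd p \<and> odd q \<and> -p < q \<and> q < p \<and> coprime p q"

text \<open>pi_1(S^3_n(K(p,q))) = < x, y | w x = y w,  (w backwards) w x^{n - 2 sigma} = 1 >,
  where (w backwards) w x^{-2 sigma} is the longitude. A homomorphism to SL(2,R)
  is determined by the images X, Y of the generators satisfying the relations.\<close>
definition surgery_rep :: "int \<Rightarrow> int \<Rightarrow> int \<Rightarrow> real m2 \<Rightarrow> real m2 \<Rightarrow> bool" where
  "surgery_rep p q n X Y \<longleftrightarrow>
     m2det X = 1 \<and> m2det Y = 1 \<and>
     m2mul (wordW p q X Y) X = m2mul Y (wordW p q X Y) \<and>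
     m2mul (m2mul (wordWrev p q X Y) (wordW p q X Y)) (m2zpow X (n - 2 * sigma p q)) = m2id"

definition has_nontrivial_SL2R_rep :: "int \<Rightarrow> int \<Rightarrow> int \<Rightarrow> bool" where
  "has_nontrivial_SL2R_rep p q n \<longleftrightarrow>
     (\<exists>X Y. surgery_rep p q n X Y \<and> (X \<noteq> m2id \<or> Y \<noteq> m2id))"

definition real_sol :: "int \<Rightarrow> int \<Rightarrow> int \<Rightarrow> bool" where
  "real_sol p q n \<longleftrightarrow> (\<exists>t u :: real. t \<notin> {-1, 0, 1} \<and>
     Apq p q t u = (t - inverse t) * Bpq p q t u \<and>
     t powi (n - 2 * sigma p q) * ((t - inverse t)^2 - u) * (Bpq p q t u)^2 = 1)"

definition circle_sol :: "int \<Rightarrow> int \<Rightarrow> int \<Rightarrow> bool" where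
  "circle_sol p q n \<longleftrightarrow> (\<exists>(\<theta>::real) (u::real). let t = cis \<theta>; v = complex_of_real u in
     t \<noteq> 1 \<and> t \<noteq> -1 \<and> (u < -4 * (sin \<theta>)^2 \<or> 0 < u) \<and>
     Apq p q t v = (t - inverse t) * Bpq p q t v \<and>
     t powi (n - 2 * sigma p q) * ((t - inverse t)^2 - v) * (Bpq p q t v)^2 = 1)"

definition minus_one_sol :: "int \<Rightarrow> int \<Rightarrow> int \<Rightarrow> bool" where
  "minus_one_sol p q n \<longleftrightarrow> odd n \<and> (\<exists>u::real.
     Apq p q (-1) u = 0 \<and>
     - of_int (n - 2 * sigma p q) * u * Bpq p q (-1) u = 2 * Dpq p q (-1) u)"

end

theory Submission
  imports Defs
begin

text \<open>
  If the images X, Y of the two meridians have no common eigenvector, then over a field containing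
  the eigenvalues t, 1/t of X the pair (X, Y) is conjugate to the Riley pair (C, D), with u read
  off from tr XY. Since e_(p-i) = e_i, the word w read backwards is w with x and y exchanged. Hence
  W = w(C, D) has lower left entry -u B, the relation w x = y w becomes A = (t - 1/t) B, and the
  matrix Q, which conjugates C to D and D to C and squares to kappa = (t - 1/t)^2 - u, turns
  kappa (w backwards) w into the square of the upper triangular matrix Q W. For t <> 1, -1 the
  surgery relation then reduces to t^(n - 2 sigma) kappa B^2 = 1; for t = -1 it reduces to the
  second system, and for t = 1 it cannot hold.

  A real t gives a real representation directly. For t = e^(i theta) a real pair with the same
  traces exists exactly when u (u + 4 sin^2 theta) > 0; conversely this inequality is forced by
  tr [X, Y] >= 2, which holds whenever X is real and elliptic. Finally, if n = 1 or n = -1, a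
  representation with a common eigenvector is triangular, and the surgery relation makes its
  diagonal and then its unipotent part trivial.
\<close>

fun m2_c :: "'a m2 \<Rightarrow> 'a" where "m2_c (M2 a b c d) = c"

fun m2tr :: "'a::comm_ring_1 m2 \<Rightarrow> 'a" where "m2tr (M2 a b c d) = a + d"

fun m2T :: "'a m2 \<Rightarrow> 'a m2" where "m2T (M2 a b c d) = M2 a c b d"

fun m2smul :: "'a::comm_ring_1 \<Rightarrow> 'a m2 \<Rightarrow> 'a m2" where
  "m2smul k (M2 a b c d) = M2 (k * a) (k * b) (k * c) (k * d)"

lemma m2tr_smul: "m2tr (m2smul k A) = k * m2tr A"
  by (cases A) (simp add: algebra_simps)

lemma m2mul_assoc: "m2mul (m2mul A B) C = m2mul A (m2mul B C)"
  by (cases A; cases B; cases C) (simp add: algebra_simps)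

lemma m2mul_m2id_left [simp]: "m2mul m2id A = A"
  by (cases A) (simp add: m2id_def)

lemma m2mul_m2id_right [simp]: "m2mul A m2id = A"
  by (cases A) (simp add: m2id_def)

lemma m2mul_smul_left: "m2mul (m2smul k A) B = m2smul k (m2mul A B)"
  by (cases A; cases B) (simp add: algebra_simps)

lemma m2mul_smul_right: "m2mul A (m2smul k B) = m2smul k (m2mul A B)"
  by (cases A; cases B) (simp add: algebra_simps)

lemma m2smul_cancel:
  fixes k :: "'a::field"
  assumes "k \<noteq> 0" and "m2smul k A = m2smul k B"
  shows "A = B"
  using assms by (cases A; cases B) simp

lemma m2det_mul: "m2det (m2mul A B) = m2det A * m2det B"
  by (cases A; cases B) (simp add: algebra_simps)

lemma m2det_m2id [simp]: "m2det m2id = 1"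
  by (simp add: m2id_def)

lemma m2det_adj: "m2det (m2adj A) = m2det A"
  by (cases A) (simp add: algebra_simps)

lemma m2det_pow: "m2det (m2pow A m) = m2det A ^ m"
  by (induction m) (simp_all add: m2det_mul)

lemma m2det_zpow: "m2det A = 1 \<Longrightarrow> m2det (m2zpow A k) = 1"
  unfolding m2zpow_def by (simp add: m2det_pow m2det_adj)

lemma m2mul_adj_right: "m2mul A (m2adj A) = m2smul (m2det A) m2id"
  by (cases A) (simp add: m2id_def algebra_simps)

lemma m2mul_adj_left: "m2mul (m2adj A) A = m2smul (m2det A) m2id"
  by (cases A) (simp add: m2id_def algebra_simps)

lemma m2mul_cancel_left:
  fixes H :: "'a::field m2"
  assumes "m2det H \<noteq> 0" and "m2mul H A = m2mul H B"
  shows "A = B"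
proof -
  from assms(2) have "m2mul (m2adj H) (m2mul H A) = m2mul (m2adj H) (m2mul H B)" by simp
  then have "m2smul (m2det H) A = m2smul (m2det H) B"
    by (simp add: m2mul_assoc[symmetric] m2mul_adj_left m2mul_smul_left)
  then show ?thesis using m2smul_cancel assms(1) by blast
qed

lemma m2mul_cancel_right:
  fixes H :: "'a::field m2"
  assumes "m2det H \<noteq> 0" and "m2mul A H = m2mul B H"
  shows "A = B"
proof -
  from assms(2) have "m2mul (m2mul A H) (m2adj H) = m2mul (m2mul B H) (m2adj H)" by simp
  then have "m2smul (m2det H) A = m2smul (m2det H) B"
    by (simp add: m2mul_assoc m2mul_adj_right m2mul_smul_right)
  then show ?thesis using m2smul_cancel assms(1) by blast
qed

lemma m2pow_commute: "m2mul (m2pow A m) A = m2mul A (m2pow A m)"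
  by (induction m) (simp_all add: m2mul_assoc)

lemma m2T_mul: "m2T (m2mul A B) = m2mul (m2T B) (m2T A)"
  by (cases A; cases B) (simp add: algebra_simps)

lemma m2T_m2id [simp]: "m2T m2id = m2id"
  by (simp add: m2id_def)

lemma m2T_adj: "m2T (m2adj A) = m2adj (m2T A)"
  by (cases A) simp

lemma m2T_pow: "m2T (m2pow A m) = m2pow (m2T A) m"
  by (induction m) (simp_all add: m2T_mul m2pow_commute)

lemma m2T_zpow: "m2T (m2zpow A k) = m2zpow (m2T A) k"
  unfolding m2zpow_def by (simp add: m2T_pow m2T_adj)

lemma m2tr_m2T: "m2tr (m2T A) = m2tr A"
  by (cases A) simp

lemma m2pow_upper_triangular:
  "\<exists>z. m2pow (M2 a b 0 d) m = M2 (a ^ m) z 0 (d ^ m) \<and> (a - d) * z = b * (a ^ m - d ^ m)"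
proof (induction m)
  case 0
  then show ?case by (simp add: m2id_def)
next
  case (Suc m)
  then obtain z where z: "m2pow (M2 a b 0 d) m = M2 (a ^ m) z 0 (d ^ m)"
    and dz: "(a - d) * z = b * (a ^ m - d ^ m)" by blast
  have "(a - d) * (a ^ m * b + z * d) = (a - d) * a ^ m * b + d * ((a - d) * z)"
    by (simp add: algebra_simps)
  also have "\<dots> = b * (a ^ Suc m - d ^ Suc m)"
    unfolding dz by (simp add: algebra_simps)
  finally show ?case using z by (intro exI[of _ "a ^ m * b + z * d"]) (simp add: algebra_simps)
qed

lemma m2zpow_upper_triangular:
  fixes a :: "'a::field"
  assumes "a * d = 1"
  shows "\<exists>z. m2zpow (M2 a b 0 d) k = M2 (a powi k) z 0 (d powi k)
           \<and> (a - d) * z = b * (a powi k - d powi k)"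
proof (cases "0 \<le> k")
  case True
  then obtain m where "k = int m" by (metis nonneg_eq_int)
  then show ?thesis
    using m2pow_upper_triangular[of a b d m] True by (simp add: m2zpow_def)
next
  case False
  then obtain m where k: "k = - int m" by (metis nle_le nonpos_int_cases)
  have inv: "inverse (a ^ m) = d ^ m" "inverse (d ^ m) = a ^ m"
    using assms by (simp_all add: power_mult_distrib[symmetric] inverse_unique mult.commute)
  obtain z where "m2pow (M2 d (-b) 0 a) m = M2 (d ^ m) z 0 (a ^ m)"
    and "(d - a) * z = - b * (d ^ m - a ^ m)"
    using m2pow_upper_triangular by blast
  then show ?thesis
    using False unfolding k m2zpow_def
    by (intro exI[of _ z]) (simp add: power_int_minus inv algebra_simps)
qed

text \<open>The upper right entry is k a^(k-1) b, written using a^-1 = a.\<close>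

lemma m2zpow_upper_involutive_diag:
  fixes a :: "'a::field"
  assumes "a * a = 1"
  shows "m2zpow (M2 a b 0 a) k = M2 (a powi k) (of_int k * a * a powi k * b) 0 (a powi k)"
proof -
  have pow: "m2pow (M2 a c 0 a) m = M2 (a ^ m) (of_nat m * a * a ^ m * c) 0 (a ^ m)" for c m
  proof (induction m)
    case (Suc m)
    have "a ^ m * c + of_nat m * a * a ^ m * c * a = of_nat (Suc m) * a * a ^ Suc m * c"
      using assms by (simp add: algebra_simps)
    then show ?case using Suc by simp
  qed (simp add: m2id_def)
  have inv: "inverse (a ^ m) = a ^ m" for m
    using assms by (simp add: power_mult_distrib[symmetric] inverse_unique)
  show ?thesis
  proof (cases "0 \<le> k")
    case True
    then obtain m where "k = int m" by (metis nonneg_eq_int)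
    then show ?thesis using pow[of b m] by (simp add: m2zpow_def)
  next
    case False
    then obtain m where k: "k = - int m" by (metis nle_le nonpos_int_cases)
    show ?thesis
      using pow[of "-b" m] False unfolding k m2zpow_def
      by (simp add: power_int_minus inv)
  qed
qed

definition m2prod :: "('b \<Rightarrow> 'a::comm_ring_1 m2) \<Rightarrow> 'b list \<Rightarrow> 'a m2" where
  "m2prod f xs = foldl (\<lambda>M i. m2mul M (f i)) m2id xs"

lemma foldl_m2mul: "foldl (\<lambda>M i. m2mul M (f i)) A xs = m2mul A (m2prod f xs)"
proof (induction xs arbitrary: A)
  case Nil
  then show ?case by (simp add: m2prod_def)
next
  case (Cons x xs)
  have "m2prod f (x # xs) = m2mul (f x) (m2prod f xs)"
    using Cons[of "f x"] by (simp add: m2prod_def)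
  then show ?case using Cons[of "m2mul A (f x)"] by (simp add: m2mul_assoc)
qed

lemma m2prod_Nil [simp]: "m2prod f [] = m2id"
  by (simp add: m2prod_def)

lemma m2prod_Cons: "m2prod f (x # xs) = m2mul (f x) (m2prod f xs)"
  using foldl_m2mul[of f "f x" xs] by (simp add: m2prod_def)

lemma m2prod_append: "m2prod f (xs @ ys) = m2mul (m2prod f xs) (m2prod f ys)"
  using foldl_m2mul[of f "m2prod f xs" ys] by (simp add: m2prod_def)

lemma m2prod_map: "m2prod f xs = m2prod id (map f xs)"
  by (induction xs) (simp_all add: m2prod_Cons)

lemma m2T_m2prod: "m2T (m2prod f xs) = m2prod (\<lambda>i. m2T (f i)) (rev xs)"
  by (induction xs) (simp_all add: m2prod_Cons m2prod_append m2T_mul)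

lemma m2det_m2prod: "(\<And>i. i \<in> set xs \<Longrightarrow> m2det (f i) = 1) \<Longrightarrow> m2det (m2prod f xs) = 1"
  by (induction xs) (simp_all add: m2prod_Cons m2det_mul)

lemma wordW_m2prod: "wordW p q X Y = m2prod (wfactor p q X Y) [1..p-1]"
  unfolding wordW_def m2prod_def ..

lemma wordWrev_m2prod: "wordWrev p q X Y = m2prod (wfactor p q X Y) (rev [1..p-1])"
  unfolding wordWrev_def m2prod_def ..

lemma m2det_wordW: "m2det X = 1 \<Longrightarrow> m2det Y = 1 \<Longrightarrow> m2det (wordW p q X Y) = 1"
  unfolding wordW_m2prod by (rule m2det_m2prod) (simp add: wfactor_def m2det_zpow)

lemma eps_reflect:
  assumes "two_bridge p q" and "1 \<le> i" and "i \<le> p - 1"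
  shows "eps p q (p - i) = eps p q i"
proof -
  from assms(1) have p: "0 < p" "odd q" "coprime p q" unfolding two_bridge_def by auto
  have "\<not> p dvd i" using assms(2,3) zdvd_imp_le by fastforce
  then have nd: "(i * q) mod p \<noteq> 0"
    using p(3) by (metis coprime_dvd_mult_left_iff mod_eq_0_iff_dvd)
  have "(p - i) * q div p = (q * p + (- (i * q))) div p" by (simp add: algebra_simps)
  also have "\<dots> = q + (- (i * q)) div p" using p(1) by (metis add.commute div_mult_self1 less_irrefl)
  also have "\<dots> = q - (i * q) div p - 1" using nd p(1) by (simp add: zdiv_zminus1_eq_if)
  finally have "(p - i) * q div p = q - (i * q) div p - 1" .
  then show ?thesis using p(2) unfolding eps_def by simp
qed

lemma wordWrev_eq_wordW_swap:
  assumes "two_bridge p q"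
  shows "wordWrev p q X Y = wordW p q Y X"
proof -
  from assms have "odd p" unfolding two_bridge_def by auto
  have "map (wfactor p q X Y) (rev [1..p-1]) = map (wfactor p q Y X) [1..p-1]"
  proof (rule nth_equalityI)
    fix j assume "j < length (map (wfactor p q X Y) (rev [1..p-1]))"
    then have j: "int j < p - 1" by simp
    have "rev [1..p-1] ! j = p - (1 + int j)" using j by (simp add: rev_nth)
    moreover have "eps p q (p - (1 + int j)) = eps p q (1 + int j)"
      using j by (intro eps_reflect[OF assms]) auto
    ultimately show "map (wfactor p q X Y) (rev [1..p-1]) ! j = map (wfactor p q Y X) [1..p-1] ! j"
      using j \<open>odd p\<close> by (simp add: wfactor_def)
  qed simp
  then show ?thesis unfolding wordWrev_m2prod wordW_m2prod by (metis m2prod_map)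
qed

abbreviation knot_relation :: "int \<Rightarrow> int \<Rightarrow> 'a::comm_ring_1 m2 \<Rightarrow> 'a m2 \<Rightarrow> bool" where
  "knot_relation p q X Y \<equiv> m2mul (wordW p q X Y) X = m2mul Y (wordW p q X Y)"

abbreviation longitude_relation :: "int \<Rightarrow> int \<Rightarrow> int \<Rightarrow> 'a::comm_ring_1 m2 \<Rightarrow> 'a m2 \<Rightarrow> bool" where
  "longitude_relation p q k X Y \<equiv>
     m2mul (m2mul (wordWrev p q X Y) (wordW p q X Y)) (m2zpow X k) = m2id"

definition intertwines :: "'a::comm_ring_1 m2 \<Rightarrow> 'a m2 \<Rightarrow> 'a m2 \<Rightarrow> bool" where
  "intertwines H A X \<longleftrightarrow> m2mul H A = m2mul X H"

lemma intertwines_m2id: "intertwines H m2id m2id"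
  unfolding intertwines_def by simp

lemma intertwines_mul:
  assumes "intertwines H A X" and "intertwines H B Y"
  shows "intertwines H (m2mul A B) (m2mul X Y)"
proof -
  have "m2mul H (m2mul A B) = m2mul (m2mul H A) B" by (simp add: m2mul_assoc)
  also have "\<dots> = m2mul X (m2mul H B)" using assms(1) by (simp add: intertwines_def m2mul_assoc)
  also have "\<dots> = m2mul (m2mul X Y) H" using assms(2) by (simp add: intertwines_def m2mul_assoc)
  finally show ?thesis unfolding intertwines_def .
qed

text \<open>The adjugate of A is tr A - A, whence the trace hypothesis.\<close>

lemma intertwines_adj:
  fixes H :: "'a::field m2"
  assumes "intertwines H A X" and "m2tr A = m2tr X"
  shows "intertwines H (m2adj A) (m2adj X)"
proof -
  obtain h1 h2 h3 h4 a1 a2 a3 a4 x1 x2 x3 x4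
    where HAX: "H = M2 h1 h2 h3 h4" "A = M2 a1 a2 a3 a4" "X = M2 x1 x2 x3 x4"
    by (cases H; cases A; cases X)
  show ?thesis using assms unfolding HAX intertwines_def by simp algebra
qed

lemma intertwines_pow: "intertwines H A X \<Longrightarrow> intertwines H (m2pow A m) (m2pow X m)"
  by (induction m) (simp_all add: intertwines_m2id intertwines_mul)

lemma intertwines_zpow:
  fixes H :: "'a::field m2"
  shows "intertwines H A X \<Longrightarrow> m2tr A = m2tr X \<Longrightarrow> intertwines H (m2zpow A k) (m2zpow X k)"
  unfolding m2zpow_def by (simp add: intertwines_pow intertwines_adj)

lemma intertwines_m2prod:
  "(\<And>i. i \<in> set xs \<Longrightarrow> intertwines H (f i) (g i)) \<Longrightarrow> intertwines H (m2prod f xs) (m2prod g xs)"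
  by (induction xs) (simp_all add: m2prod_Cons intertwines_m2id intertwines_mul)

lemma intertwines_wfactor:
  fixes H :: "'a::field m2"
  assumes "intertwines H A X" "intertwines H B Y" "m2tr A = m2tr X" "m2tr B = m2tr Y"
  shows "intertwines H (wfactor p q A B i) (wfactor p q X Y i)"
  using assms unfolding wfactor_def by (simp add: intertwines_zpow)

lemma intertwines_wordW:
  fixes H :: "'a::field m2"
  assumes "intertwines H A X" "intertwines H B Y" "m2tr A = m2tr X" "m2tr B = m2tr Y"
  shows "intertwines H (wordW p q A B) (wordW p q X Y)"
  unfolding wordW_m2prod using assms by (intro intertwines_m2prod intertwines_wfactor)

lemma intertwines_wordWrev:
  fixes H :: "'a::field m2"
  assumes "intertwines H A X" "intertwines H B Y" "m2tr A = m2tr X" "m2tr B = m2tr Y"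
  shows "intertwines H (wordWrev p q A B) (wordWrev p q X Y)"
  unfolding wordWrev_m2prod using assms by (intro intertwines_m2prod intertwines_wfactor)

lemma intertwines_m2det:
  fixes H :: "'a::field m2"
  assumes "m2det H \<noteq> 0" and "intertwines H A X"
  shows "m2det A = m2det X"
proof -
  have "m2det (m2mul H A) = m2det (m2mul X H)" using assms(2) unfolding intertwines_def by simp
  then show ?thesis using assms(1) by (simp add: m2det_mul)
qed

lemma m2tr_conjugate: "m2tr (m2mul (m2adj H) (m2mul X H)) = m2det H * m2tr X"
  by (cases H; cases X) (simp add: algebra_simps)

lemma intertwines_m2tr:
  fixes H :: "'a::field m2"
  assumes "m2det H \<noteq> 0" and "intertwines H A X"
  shows "m2tr A = m2tr X"
proof -
  have "m2mul (m2adj H) (m2mul H A) = m2mul (m2adj H) (m2mul X H)"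
    using assms(2) unfolding intertwines_def by simp
  then have "m2smul (m2det H) A = m2mul (m2adj H) (m2mul X H)"
    by (simp add: m2mul_assoc[symmetric] m2mul_adj_left m2mul_smul_left)
  then have "m2det H * m2tr A = m2det H * m2tr X"
    using m2tr_conjugate[of H X] by (metis m2tr_smul)
  then show ?thesis using assms(1) by simp
qed

lemma intertwines_eq_iff:
  fixes H :: "'a::field m2"
  assumes "m2det H \<noteq> 0" "intertwines H A X" "intertwines H B Y"
  shows "A = B \<longleftrightarrow> X = Y"
  using assms m2mul_cancel_left[OF assms(1)] m2mul_cancel_right[OF assms(1)]
  unfolding intertwines_def by metis

lemma intertwines_conjugate:
  fixes H :: "'a::field m2"
  assumes "m2det H \<noteq> 0"
  shows "intertwines H (m2smul (inverse (m2det H)) (m2mul (m2adj H) (m2mul X H))) X"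
proof -
  have "m2mul H (m2smul (inverse (m2det H)) (m2mul (m2adj H) (m2mul X H)))
      = m2smul (inverse (m2det H)) (m2smul (m2det H) (m2mul X H))"
    by (simp add: m2mul_smul_right m2mul_assoc[symmetric] m2mul_adj_right m2mul_smul_left)
  also have "\<dots> = m2mul X H" using assms by (cases "m2mul X H") simp
  finally show ?thesis unfolding intertwines_def .
qed

lemma knot_relation_intertwines:
  fixes H :: "'a::field m2"
  assumes "m2det H \<noteq> 0" "intertwines H A X" "intertwines H B Y"
  shows "knot_relation p q A B \<longleftrightarrow> knot_relation p q X Y"
proof -
  have tr: "m2tr A = m2tr X" "m2tr B = m2tr Y" using assms intertwines_m2tr by blast+
  have "intertwines H (wordW p q A B) (wordW p q X Y)" by (rule intertwines_wordW[OF assms(2,3) tr])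
  then show ?thesis using assms by (intro intertwines_eq_iff intertwines_mul)
qed

lemma longitude_relation_intertwines:
  fixes H :: "'a::field m2"
  assumes "m2det H \<noteq> 0" "intertwines H A X" "intertwines H B Y"
  shows "longitude_relation p q k A B \<longleftrightarrow> longitude_relation p q k X Y"
proof -
  have tr: "m2tr A = m2tr X" "m2tr B = m2tr Y" using assms intertwines_m2tr by blast+
  have "intertwines H (wordW p q A B) (wordW p q X Y)"
    "intertwines H (wordWrev p q A B) (wordWrev p q X Y)"
    "intertwines H (m2zpow A k) (m2zpow X k)"
    using assms(2,3) tr by (simp_all add: intertwines_wordW intertwines_wordWrev intertwines_zpow)
  then show ?thesis using assms(1) by (intro intertwines_eq_iff intertwines_mul intertwines_m2id)
qed

lemma knot_relation_m2tr:
  fixes X Y :: "'a::field m2"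
  assumes "m2det X = 1" "m2det Y = 1" "knot_relation p q X Y"
  shows "m2tr Y = m2tr X"
proof -
  have "m2det (wordW p q X Y) = 1" using assms(1,2) by (rule m2det_wordW)
  then show ?thesis
    using intertwines_m2tr[of "wordW p q X Y" X Y] assms(3) unfolding intertwines_def by simp
qed

section \<open>Common eigenvectors and the Riley normal form\<close>

fun m2_mulv :: "'a::comm_ring_1 m2 \<Rightarrow> 'a \<times> 'a \<Rightarrow> 'a \<times> 'a" where
  "m2_mulv (M2 a b c d) (x, y) = (a * x + b * y, c * x + d * y)"

definition pair_scale :: "'a::comm_ring_1 \<Rightarrow> 'a \<times> 'a \<Rightarrow> 'a \<times> 'a" where
  "pair_scale k v = (k * fst v, k * snd v)"

lemma m2_mulv_mul: "m2_mulv (m2mul A B) v = m2_mulv A (m2_mulv B v)"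
  by (cases A; cases B; cases v) (simp add: algebra_simps)

lemma m2_mulv_scale: "m2_mulv A (pair_scale k v) = pair_scale k (m2_mulv A v)"
  by (cases A; cases v) (simp add: pair_scale_def algebra_simps)

lemma m2det_eq_0_if_mulv_eq_0:
  fixes H :: "'a::field m2"
  assumes "m2_mulv H v = (0, 0)" and "v \<noteq> (0, 0)"
  shows "m2det H = 0"
proof -
  obtain a b c d v1 v2 where Hv: "H = M2 a b c d" "v = (v1, v2)" by (cases H; cases v)
  with assms(1) have "a * v1 + b * v2 = 0" "c * v1 + d * v2 = 0" by auto
  then have "(a * d - b * c) * v1 = 0" "(a * d - b * c) * v2 = 0" by algebra+
  then show ?thesis using assms(2) Hv by auto
qed

definition common_eigenvector :: "'a::comm_ring_1 m2 \<Rightarrow> 'a m2 \<Rightarrow> bool" where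
  "common_eigenvector X Y \<longleftrightarrow>
     (\<exists>v \<alpha> \<beta>. v \<noteq> (0, 0) \<and> m2_mulv X v = pair_scale \<alpha> v \<and> m2_mulv Y v = pair_scale \<beta> v)"

lemma common_eigenvector_intertwines:
  fixes H :: "'a::field m2"
  assumes "m2det H \<noteq> 0" "intertwines H A X" "intertwines H B Y" "common_eigenvector A B"
  shows "common_eigenvector X Y"
proof -
  obtain v \<alpha> \<beta> where v: "v \<noteq> (0, 0)" "m2_mulv A v = pair_scale \<alpha> v" "m2_mulv B v = pair_scale \<beta> v"
    using assms(4) unfolding common_eigenvector_def by blast
  have "m2_mulv H v \<noteq> (0, 0)" using m2det_eq_0_if_mulv_eq_0 assms(1) v(1) by blast
  moreover have "m2_mulv X (m2_mulv H v) = pair_scale \<alpha> (m2_mulv H v)"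
    using assms(2) v(2) unfolding intertwines_def by (metis m2_mulv_mul m2_mulv_scale)
  moreover have "m2_mulv Y (m2_mulv H v) = pair_scale \<beta> (m2_mulv H v)"
    using assms(3) v(3) unfolding intertwines_def by (metis m2_mulv_mul m2_mulv_scale)
  ultimately show ?thesis unfolding common_eigenvector_def by blast
qed

lemma eigenvector_exists:
  fixes X :: "'a::field m2"
  assumes "m2det X = 1" "m2tr X = t + s" "t * s = 1"
  shows "\<exists>v. v \<noteq> (0, 0) \<and> m2_mulv X v = pair_scale t v"
proof -
  obtain x1 x2 x3 x4 where X: "X = M2 x1 x2 x3 x4" by (cases X)
  have d: "x1 * x4 - x2 * x3 = 1" "x1 + x4 = t + s" using assms X by auto
  show ?thesis
  proof (cases "x2 \<noteq> 0 \<or> x1 \<noteq> t")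
    case True
    have "x3 * x2 + x4 * (t - x1) = t * (t - x1)" using d assms(3) by algebra
    then show ?thesis
      using True X by (intro exI[of _ "(x2, t - x1)"]) (auto simp: pair_scale_def algebra_simps)
  next
    case False
    then have "x2 = 0" "x1 = t" by auto
    show ?thesis
    proof (cases "x3 \<noteq> 0 \<or> x4 \<noteq> t")
      case True
      then show ?thesis using \<open>x2 = 0\<close> \<open>x1 = t\<close> X
        by (intro exI[of _ "(t - x4, x3)"]) (auto simp: pair_scale_def algebra_simps)
    next
      case False
      then show ?thesis using \<open>x2 = 0\<close> \<open>x1 = t\<close> X
        by (intro exI[of _ "(1, 0)"]) (auto simp: pair_scale_def)
    qed
  qed
qed

lemma common_eigenvector_triangularize:
  fixes X Y :: "'a::field m2"
  assumes "common_eigenvector X Y"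
  shows "\<exists>H X' Y'. m2det H \<noteq> 0 \<and> intertwines H X' X \<and> intertwines H Y' Y
                  \<and> m2_c X' = 0 \<and> m2_c Y' = 0"
proof -
  obtain v1 v2 \<alpha> \<beta> where v: "(v1, v2) \<noteq> (0, 0)"
    "m2_mulv X (v1, v2) = pair_scale \<alpha> (v1, v2)" "m2_mulv Y (v1, v2) = pair_scale \<beta> (v1, v2)"
    using assms unfolding common_eigenvector_def by auto
  obtain w1 w2 where dH: "m2det (M2 v1 w1 v2 w2) \<noteq> 0"
    using v(1) by (cases "v1 = 0") (auto intro: that[of 1 0] that[of 0 1])
  define H where "H = M2 v1 w1 v2 w2"
  define conj where "conj M = m2smul (inverse (m2det H)) (m2mul (m2adj H) (m2mul M H))" for M
  have "m2_c (conj M) = 0" if "m2_mulv M (v1, v2) = pair_scale \<gamma> (v1, v2)" for M \<gamma>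
    using that unfolding conj_def H_def by (cases M) (simp add: pair_scale_def algebra_simps)
  then show ?thesis
    using dH v intertwines_conjugate[of H] unfolding H_def conj_def by blast
qed

text \<open>With h an eigenvector of X for t, the vector z = t h - Y h is an eigenvector of Y for s
  (Cayley-Hamilton), and X moves it off its s-eigenline by u h.\<close>

lemma eigenvector_pair:
  fixes X Y :: "'a::field m2"
  assumes "m2det Y = 1" "m2tr X = t + s" "m2tr Y = t + s" "t * s = 1"
    and hX: "m2_mulv X (h1, h2) = (t * h1, t * h2)"
    and hY: "m2_mulv Y (h1, h2) = (t * h1 - z1, t * h2 - z2)"
  shows "m2_mulv Y (z1, z2) = (s * z1, s * z2)"
    and "m2_mulv X (z1, z2)
           = (s * z1 + (t^2 + s^2 - m2tr (m2mul X Y)) * h1, s * z2 + (t^2 + s^2 - m2tr (m2mul X Y)) * h2)"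
proof -
  obtain x1 x2 x3 x4 y1 y2 y3 y4 where XY: "X = M2 x1 x2 x3 x4" "Y = M2 y1 y2 y3 y4"
    by (cases X; cases Y)
  have h: "x1 * h1 + x2 * h2 = t * h1" "x3 * h1 + x4 * h2 = t * h2"
    "z1 = t * h1 - (y1 * h1 + y2 * h2)" "z2 = t * h2 - (y3 * h1 + y4 * h2)"
    using hX hY unfolding XY by auto
  have d: "y1 * y4 - y2 * y3 = 1" "x1 + x4 = t + s" "y1 + y4 = t + s"
    using assms(1-3) unfolding XY by auto
  show "m2_mulv Y (z1, z2) = (s * z1, s * z2)"
    unfolding XY using h(3,4) d(1,3) assms(4) by simp (intro conjI; algebra)
  show "m2_mulv X (z1, z2)
      = (s * z1 + (t^2 + s^2 - m2tr (m2mul X Y)) * h1, s * z2 + (t^2 + s^2 - m2tr (m2mul X Y)) * h2)"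
    unfolding XY using h d(2,3) assms(4) by simp (intro conjI; algebra)
qed

lemma riley_normal_form:
  fixes X Y :: "'a::field m2"
  assumes dX: "m2det X = 1" and dY: "m2det Y = 1" and tX: "m2tr X = t + s" and tY: "m2tr Y = t + s"
    and ts: "t * s = 1" and nc: "\<not> common_eigenvector X Y"
  defines "u \<equiv> t^2 + s^2 - m2tr (m2mul X Y)"
  shows "\<exists>H. m2det H \<noteq> 0 \<and> intertwines H (matC t) X \<and> intertwines H (matD t u) Y"
proof -
  obtain h1 h2 where h0: "(h1, h2) \<noteq> (0, 0)" and hX: "m2_mulv X (h1, h2) = pair_scale t (h1, h2)"
    using eigenvector_exists[OF dX tX ts] by auto
  define z1 where "z1 = t * h1 - fst (m2_mulv Y (h1, h2))"
  define z2 where "z2 = t * h2 - snd (m2_mulv Y (h1, h2))"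
  have hY: "m2_mulv Y (h1, h2) = (t * h1 - z1, t * h2 - z2)" unfolding z1_def z2_def by simp
  note z = eigenvector_pair[OF dY tX tY ts _ hY, folded u_def]
  have Yh: "m2_mulv Y (h1, h2) = pair_scale c (h1, h2)" if "z1 = (t - c) * h1" "z2 = (t - c) * h2" for c
    using hY that by (simp add: pair_scale_def algebra_simps)
  have u0: "u \<noteq> 0"
  proof
    assume "u = 0"
    then have "m2_mulv X (z1, z2) = pair_scale s (z1, z2)" "m2_mulv Y (z1, z2) = pair_scale s (z1, z2)"
      using z hX by (simp_all add: pair_scale_def)
    then have "(z1, z2) = (0, 0)" using nc unfolding common_eigenvector_def by blast
    then show False using Yh[of t] hX h0 nc unfolding common_eigenvector_def by auto
  qed
  define H where "H = M2 h1 (z1 / u) h2 (z2 / u)"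
  have "m2det H \<noteq> 0"
  proof
    assume "m2det H = 0"
    then obtain c where "z1 = u * c * h1" "z2 = u * c * h2"
      using h0 u0 unfolding H_def
      by (cases "h1 = 0") (auto simp: field_simps intro: that[of "z2 / (u * h2)"] that[of "z1 / (u * h1)"])
    then show False using Yh[of "t - u * c"] hX h0 nc unfolding common_eigenvector_def
      by (auto simp: algebra_simps)
  qed
  moreover have "intertwines H (matC t) X" "intertwines H (matD t u) Y"
    using hX hY z u0 inverse_unique[OF ts]
    by (cases X; cases Y; simp add: intertwines_def H_def matC_def matD_def pair_scale_def field_simps)+
  ultimately show ?thesis by blast
qed

section \<open>Traces of commutators\<close>

definition m2commutator :: "'a::comm_ring_1 m2 \<Rightarrow> 'a m2 \<Rightarrow> 'a m2" where
  "m2commutator X Y = m2mul (m2mul X Y) (m2mul (m2adj X) (m2adj Y))"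

lemma m2tr_commutator:
  fixes X Y :: "'a::field m2"
  assumes "m2det X = 1" "m2det Y = 1"
  shows "m2tr (m2commutator X Y) = m2tr X ^ 2 + m2tr Y ^ 2 + m2tr (m2mul X Y) ^ 2
           - m2tr X * m2tr Y * m2tr (m2mul X Y) - 2"
proof -
  obtain a b c d a' b' c' d' where XY: "X = M2 a b c d" "Y = M2 a' b' c' d'"
    by (cases X; cases Y)
  have "a * d - b * c = 1" "a' * d' - b' * c' = 1" using assms unfolding XY by simp_all
  then show ?thesis unfolding XY m2commutator_def by simp algebra
qed

lemma m2tr_commutator_equal_traces:
  fixes X Y :: "'a::field m2"
  assumes "m2det X = 1" "m2det Y = 1" "m2tr Y = m2tr X"
  shows "m2tr (m2commutator X Y)
           = 2 + (m2tr X ^ 2 - 2 - m2tr (m2mul X Y)) * (2 - m2tr (m2mul X Y))"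
  using m2tr_commutator[OF assms(1,2)] assms(3) by (simp add: algebra_simps power2_eq_square)

lemma intertwines_commutator:
  fixes H :: "'a::field m2"
  assumes "m2det H \<noteq> 0" "intertwines H A X" "intertwines H B Y"
  shows "intertwines H (m2commutator A B) (m2commutator X Y)"
proof -
  have "m2tr A = m2tr X" "m2tr B = m2tr Y" using assms intertwines_m2tr by blast+
  then show ?thesis
    unfolding m2commutator_def using assms(2,3) by (intro intertwines_mul intertwines_adj)
qed

lemma m2tr_commutator_common_eigenvector:
  fixes X Y :: "'a::field m2"
  assumes "m2det X = 1" "m2det Y = 1" "common_eigenvector X Y"
  shows "m2tr (m2commutator X Y) = 2"
proof -
  obtain H X' Y' where H: "m2det H \<noteq> 0" "intertwines H X' X" "intertwines H Y' Y"
    and c: "m2_c X' = 0" "m2_c Y' = 0"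
    using common_eigenvector_triangularize[OF assms(3)] by blast
  obtain a x d b y e where XY': "X' = M2 a x 0 d" "Y' = M2 b y 0 e"
    using c by (cases X'; cases Y') auto
  have "a * d = 1" "b * e = 1"
    using assms(1,2) intertwines_m2det[OF H(1) H(2)] intertwines_m2det[OF H(1) H(3)]
    unfolding XY' by simp_all
  then have "m2tr (m2commutator X' Y') = 2"
    unfolding XY' m2commutator_def by simp algebra
  then show ?thesis using intertwines_m2tr[OF H(1) intertwines_commutator[OF H]] by simp
qed

text \<open>tr [X, Y] - 2 = - det (XY - YX) is a quadratic form in the entries of XY - YX, which is
  positive semidefinite when X is a real elliptic matrix.\<close>

lemma m2tr_commutator_ge_two_if_elliptic:
  fixes X Y :: "real m2"
  assumes "m2det X = 1" "m2det Y = 1" "m2tr X ^ 2 < 4"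
  shows "2 \<le> m2tr (m2commutator X Y)"
proof -
  obtain x1 x2 x3 x4 y1 y2 y3 y4 where XY: "X = M2 x1 x2 x3 x4" "Y = M2 y1 y2 y3 y4"
    by (cases X; cases Y)
  define m where "m = x2 * y3 - y2 * x3"
  define n where "n = x1 * y2 + x2 * y4 - (y1 * x2 + y2 * x4)"
  define r where "r = x3 * y1 + x4 * y3 - (y3 * x1 + y4 * x3)"
  have d: "x1 * x4 - x2 * x3 = 1" "y1 * y4 - y2 * y3 = 1" using assms(1,2) unfolding XY by auto
  have ell: "(x1 + x4)^2 < 4" using assms(3) unfolding XY by simp
  have "x2 \<noteq> 0"
  proof
    assume "x2 = 0"
    then have "(x1 + x4)^2 - 4 = (x1 - x4)^2" using d(1) by (simp add: algebra_simps power2_eq_square)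
    then show False using ell by (metis diff_less_0_iff_less not_less zero_le_power2)
  qed
  have "4 * x2^2 * (m^2 + n * r) = (2 * x2 * m - (x1 - x4) * n)^2 + (4 - (x1 + x4)^2) * n^2"
    using d(1) unfolding m_def n_def r_def by algebra
  also have "0 \<le> \<dots>" using ell by (intro add_nonneg_nonneg) auto
  finally have "0 \<le> m^2 + n * r" using \<open>x2 \<noteq> 0\<close> by (simp add: zero_le_mult_iff)
  moreover have "m2tr (m2commutator X Y) - 2 = m^2 + n * r"
    using d unfolding XY m_def n_def r_def m2commutator_def by simp algebra
  ultimately show ?thesis by simp
qed

section \<open>The Riley pair\<close>

lemma diff_inverse_eq_0_iff: "(t::'a::field) - inverse t = 0 \<longleftrightarrow> t = 0 \<or> t = 1 \<or> t = -1"
proof -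
  have "t - inverse t = 0 \<longleftrightarrow> t = 0 \<or> (t - 1) * (t + 1) = 0"
    by (cases "t = 0") (auto simp: field_simps algebra_simps)
  then show ?thesis by (auto simp: eq_neg_iff_add_eq_0)
qed

abbreviation riley_word :: "int \<Rightarrow> int \<Rightarrow> 'a::field \<Rightarrow> 'a \<Rightarrow> 'a m2" where
  "riley_word p q t u \<equiv> wordW p q (matC t) (matD t u)"

lemma m2det_matC: "t \<noteq> 0 \<Longrightarrow> m2det (matC t) = 1"
  unfolding matC_def by simp

lemma m2det_matD: "t \<noteq> 0 \<Longrightarrow> m2det (matD t u) = 1"
  unfolding matD_def by simp

lemma m2tr_matD: "m2tr (matD t u) = m2tr (matC t)"
  unfolding matC_def matD_def by simp

definition matQ :: "'a::field \<Rightarrow> 'a \<Rightarrow> 'a m2" where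
  "matQ t u = M2 (t - inverse t) 1 (-u) (inverse t - t)"

lemma matQ_intertwines_CD: "intertwines (matQ t u) (matC t) (matD t u)"
  unfolding intertwines_def matQ_def matC_def matD_def by (simp add: algebra_simps)

lemma matQ_intertwines_DC: "intertwines (matQ t u) (matD t u) (matC t)"
  unfolding intertwines_def matQ_def matC_def matD_def by (simp add: algebra_simps)

lemma matQ_square: "m2mul (matQ t u) (matQ t u) = m2smul ((t - inverse t)^2 - u) m2id"
  unfolding matQ_def m2id_def by (simp add: algebra_simps power2_eq_square)

text \<open>diag(1, -u) conjugates the transposes of C and D to D and C; since w read backwards is w
  with the letters exchanged, it conjugates the transpose of W to W.\<close>

lemma riley_word_eq:
  assumes "two_bridge p q"
  shows "riley_word p q t u = M2 (Apq p q t u) (Bpq p q t u) (- u * Bpq p q t u) (Dpq p q t u)"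
proof -
  let ?P = "M2 1 0 0 (-u)"
  have "intertwines ?P (m2T (matD t u)) (matC t)" "intertwines ?P (m2T (matC t)) (matD t u)"
    unfolding intertwines_def matC_def matD_def by simp_all
  moreover have "m2tr (m2T (matD t u)) = m2tr (matC t)" "m2tr (m2T (matC t)) = m2tr (matD t u)"
    by (simp_all add: m2tr_m2T m2tr_matD)
  ultimately have PW: "intertwines ?P (wordW p q (m2T (matD t u)) (m2T (matC t))) (riley_word p q t u)"
    by (rule intertwines_wordW)
  have "m2T (wfactor p q (matC t) (matD t u) i) = wfactor p q (m2T (matC t)) (m2T (matD t u)) i" for i
    by (simp add: wfactor_def m2T_zpow)
  then have "m2T (riley_word p q t u) = wordWrev p q (m2T (matC t)) (m2T (matD t u))"
    unfolding wordW_m2prod wordWrev_m2prod m2T_m2prod by simp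
  then have "m2T (riley_word p q t u) = wordW p q (m2T (matD t u)) (m2T (matC t))"
    unfolding wordWrev_eq_wordW_swap[OF assms] .
  with PW have "intertwines ?P (m2T (riley_word p q t u)) (riley_word p q t u)" by simp
  then show ?thesis
    unfolding intertwines_def Apq_def Bpq_def Dpq_def by (cases "riley_word p q t u") simp
qed

lemma riley_word_det:
  assumes "two_bridge p q" and "t \<noteq> 0"
  shows "Apq p q t u * Dpq p q t u + u * (Bpq p q t u)^2 = 1"
proof -
  have "m2det (riley_word p q t u) = 1" using assms(2) by (simp add: m2det_wordW m2det_matC m2det_matD)
  then show ?thesis unfolding riley_word_eq[OF assms(1)] by (simp add: power2_eq_square algebra_simps)
qed

lemma knot_relation_riley_iff:
  assumes "two_bridge p q"
  shows "knot_relation p q (matC t) (matD t u) \<longleftrightarrow> Apq p q t u = (t - inverse t) * Bpq p q t u"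
  unfolding riley_word_eq[OF assms]
  by (auto simp: matC_def matD_def algebra_simps) (metis distrib_left mult.left_commute)

lemma matQ_mul_riley_word:
  assumes "two_bridge p q" and "Apq p q t u = (t - inverse t) * Bpq p q t u"
  shows "m2mul (matQ t u) (riley_word p q t u)
       = M2 (((t - inverse t)^2 - u) * Bpq p q t u) ((t - inverse t) * Bpq p q t u + Dpq p q t u)
            0 (- u * Bpq p q t u - (t - inverse t) * Dpq p q t u)"
  unfolding riley_word_eq[OF assms(1)] matQ_def assms(2) by (simp add: algebra_simps power2_eq_square)

lemma longitude_relation_riley_iff_square:
  assumes "two_bridge p q" and "(t - inverse t)^2 - u \<noteq> 0"
  shows "longitude_relation p q k (matC t) (matD t u) \<longleftrightarrow>
    m2mul (m2mul (m2mul (matQ t u) (riley_word p q t u)) (m2mul (matQ t u) (riley_word p q t u)))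
          (m2zpow (matC t) k)
      = m2smul ((t - inverse t)^2 - u) m2id"
proof -
  let ?Q = "matQ t u" and ?W = "riley_word p q t u" and ?R = "wordWrev p q (matC t) (matD t u)"
  have QW: "m2mul ?Q ?W = m2mul ?R ?Q"
    using intertwines_wordW[OF matQ_intertwines_CD matQ_intertwines_DC m2tr_matD[symmetric] m2tr_matD]
    unfolding intertwines_def wordWrev_eq_wordW_swap[OF assms(1)] .
  have "m2mul (m2mul ?Q ?W) (m2mul ?Q ?W) = m2mul (m2mul ?R (m2mul ?Q ?Q)) ?W"
    by (subst QW) (simp add: m2mul_assoc)
  also have "\<dots> = m2smul ((t - inverse t)^2 - u) (m2mul ?R ?W)"
    by (simp add: matQ_square m2mul_smul_left m2mul_smul_right)
  finally have "m2mul (m2mul (m2mul ?Q ?W) (m2mul ?Q ?W)) (m2zpow (matC t) k)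
      = m2smul ((t - inverse t)^2 - u) (m2mul (m2mul ?R ?W) (m2zpow (matC t) k))"
    by (simp add: m2mul_smul_left)
  then show ?thesis using m2smul_cancel[OF assms(2)] by auto
qed

lemma upper_triangular_square_mul_eq_scalar:
  fixes n1 n2 n4 z1 z z4 \<delta> \<kappa> :: "'a::field"
  assumes "\<delta> \<noteq> 0" "\<kappa> \<noteq> 0" "n1 * n4 = - \<kappa>" "n1 - n4 = \<delta> * n2" "z1 * z4 = 1" "\<delta> * z = z1 - z4"
  shows "m2mul (m2mul (M2 n1 n2 0 n4) (M2 n1 n2 0 n4)) (M2 z1 z 0 z4) = m2smul \<kappa> m2id
    \<longleftrightarrow> n1 * n1 * z1 = \<kappa>"
proof
  assume f1: "n1 * n1 * z1 = \<kappa>"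
  have "(n4 * n4 * z4) * \<kappa> = (n1 * n4) * (n1 * n4) * (z1 * z4)"
    unfolding f1[symmetric] by (simp add: algebra_simps)
  then have "(n4 * n4 * z4) * \<kappa> = \<kappa> * \<kappa>" using assms(3,5) by simp
  then have "n4 * n4 * z4 = \<kappa>" using assms(2) by simp
  moreover have "\<delta> * (n1 * n1 * z + (n1 * n2 + n2 * n4) * z4) = n1 * n1 * z1 - n4 * n4 * z4"
    using assms(4,6) by algebra
  ultimately have "\<delta> * (n1 * n1 * z + (n1 * n2 + n2 * n4) * z4) = 0" using f1 by simp
  then have "n1 * n1 * z + (n1 * n2 + n2 * n4) * z4 = 0" using assms(1) by simp
  with f1 \<open>n4 * n4 * z4 = \<kappa>\<close>
  show "m2mul (m2mul (M2 n1 n2 0 n4) (M2 n1 n2 0 n4)) (M2 z1 z 0 z4) = m2smul \<kappa> m2id"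
    by (simp add: m2id_def algebra_simps)
qed (simp add: m2id_def)

lemma longitude_relation_riley_iff:
  fixes t u :: "'a::field"
  assumes tb: "two_bridge p q" and \<delta>: "t - inverse t \<noteq> 0" and \<kappa>: "(t - inverse t)^2 - u \<noteq> 0"
    and knot: "Apq p q t u = (t - inverse t) * Bpq p q t u"
  shows "longitude_relation p q k (matC t) (matD t u)
    \<longleftrightarrow> t powi k * ((t - inverse t)^2 - u) * (Bpq p q t u)^2 = 1"
proof -
  have t0: "t \<noteq> 0" using \<delta> by auto
  obtain z where Z: "m2zpow (matC t) k = M2 (t powi k) z 0 (inverse t powi k)"
    and z: "(t - inverse t) * z = t powi k - inverse t powi k"
    using m2zpow_upper_triangular[of t "inverse t" 1 k] t0 unfolding matC_def by auto
  have det: "(t - inverse t) * Bpq p q t u * Dpq p q t u + u * (Bpq p q t u)^2 = 1"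
    using riley_word_det[OF tb t0, of u] unfolding knot .
  let ?\<delta> = "t - inverse t" and ?\<kappa> = "(t - inverse t)^2 - u"
    and ?B = "Bpq p q t u" and ?D = "Dpq p q t u"
  have "longitude_relation p q k (matC t) (matD t u) \<longleftrightarrow>
    m2mul (m2mul (M2 (?\<kappa> * ?B) (?\<delta> * ?B + ?D) 0 (- u * ?B - ?\<delta> * ?D))
                 (M2 (?\<kappa> * ?B) (?\<delta> * ?B + ?D) 0 (- u * ?B - ?\<delta> * ?D)))
          (M2 (t powi k) z 0 (inverse t powi k)) = m2smul ?\<kappa> m2id"
    unfolding Z[symmetric] using longitude_relation_riley_iff_square[OF tb \<kappa>, of k]
    by (simp only: matQ_mul_riley_word[OF tb knot])
  also have "\<dots> \<longleftrightarrow> (?\<kappa> * ?B) * (?\<kappa> * ?B) * t powi k = ?\<kappa>"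
  proof (rule upper_triangular_square_mul_eq_scalar[OF \<delta> \<kappa> _ _ _ z])
    have "?\<kappa> * ?B * (- u * ?B - ?\<delta> * ?D) = - ?\<kappa> * (?\<delta> * ?B * ?D + u * ?B^2)"
      by (simp add: algebra_simps power2_eq_square)
    then show "?\<kappa> * ?B * (- u * ?B - ?\<delta> * ?D) = - ?\<kappa>" unfolding det by simp
    show "?\<kappa> * ?B - (- u * ?B - ?\<delta> * ?D) = ?\<delta> * (?\<delta> * ?B + ?D)"
      by (simp add: algebra_simps power2_eq_square)
    show "t powi k * inverse t powi k = 1"
      using t0 by (metis power_int_mult_distrib right_inverse power_int_1_left)
  qed
  also have "\<dots> \<longleftrightarrow> ?\<kappa> * (t powi k * ?\<kappa> * ?B^2) = ?\<kappa>"
    by (simp only: power2_eq_square mult_ac)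
  also have "\<dots> \<longleftrightarrow> t powi k * ?\<kappa> * ?B^2 = 1"
    using \<kappa> by simp
  finally show ?thesis .
qed

lemma longitude_relation_riley_involution:
  fixes t u :: "'a::field"
  assumes tb: "two_bridge p q" and t: "t * t = 1" and A: "Apq p q t u = 0"
  shows "longitude_relation p q k (matC t) (matD t u)
    \<longleftrightarrow> t powi k = -1 \<and> of_int k * t * u * Bpq p q t u = 2 * Dpq p q t u"
proof -
  define B D \<epsilon> where "B = Bpq p q t u" and "D = Dpq p q t u" and "\<epsilon> = t powi k"
  have inv: "inverse t = t" using t by (simp add: inverse_unique)
  then have \<delta>: "t - inverse t = 0" by simp
  have t0: "t \<noteq> 0" using t by auto
  have uB: "u * B^2 = 1" using riley_word_det[OF tb t0, of u] A unfolding B_def by simp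
  then have u0: "u \<noteq> 0" by auto
  have \<kappa>: "(t - inverse t)^2 - u = - u" using \<delta> by simp
  have N: "m2mul (matQ t u) (riley_word p q t u) = M2 (- u * B) D 0 (- u * B)"
    using matQ_mul_riley_word[OF tb, of t u] A \<delta> unfolding B_def D_def by simp
  have Z: "m2zpow (matC t) k = M2 \<epsilon> (of_int k * t * \<epsilon>) 0 \<epsilon>"
    using m2zpow_upper_involutive_diag[OF t, of 1 k] unfolding matC_def inv \<epsilon>_def by simp
  have "longitude_relation p q k (matC t) (matD t u) \<longleftrightarrow>
    m2mul (m2mul (M2 (- u * B) D 0 (- u * B)) (M2 (- u * B) D 0 (- u * B)))
          (M2 \<epsilon> (of_int k * t * \<epsilon>) 0 \<epsilon>) = m2smul (- u) m2id"
    unfolding Z[symmetric] using longitude_relation_riley_iff_square[OF tb, of t u k] u0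
    by (simp only: N \<kappa> neg_equal_0_iff_equal not_False_eq_True)
  also have "\<dots> \<longleftrightarrow> u * \<epsilon> = - u \<and> u * (of_int k * t * \<epsilon>) + - 2 * (u * B * D) * \<epsilon> = 0"
  proof -
    have prod: "m2mul (m2mul (M2 n D 0 n) (M2 n D 0 n)) (M2 \<epsilon> z 0 \<epsilon>)
        = M2 (n * n * \<epsilon>) (n * n * z + (n * D + D * n) * \<epsilon>) 0 (n * n * \<epsilon>)" for n z
      by (simp add: algebra_simps)
    have "(- u * B) * (- u * B) = u * (u * B^2)" by (simp add: power2_eq_square algebra_simps)
    then have n2: "(- u * B) * (- u * B) = u" using uB by simp
    have nD: "(- u * B) * D + D * (- u * B) = - 2 * (u * B * D)" by (simp add: algebra_simps)
    show ?thesis unfolding prod n2 nD by (auto simp: m2id_def)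
  qed
  also have "\<dots> \<longleftrightarrow> \<epsilon> = -1 \<and> of_int k * t = 2 * B * D"
  proof -
    have "u * \<epsilon> = - u \<longleftrightarrow> \<epsilon> = -1"
      using u0 by (metis mult_cancel_left mult_minus1_right)
    moreover have "u * (of_int k * t * (-1)) + - 2 * (u * B * D) * (-1) = - u * (of_int k * t - 2 * B * D)"
      by (simp add: algebra_simps)
    ultimately show ?thesis using u0 by auto
  qed
  also have "\<dots> \<longleftrightarrow> \<epsilon> = -1 \<and> of_int k * t * u * B = 2 * D"
  proof -
    have "(2 * B * D) * (u * B) = 2 * D * (u * B^2)" by (simp add: power2_eq_square mult_ac)
    then have r: "(2 * B * D) * (u * B) = 2 * D" using uB by simp
    have l: "of_int k * t * u * B = (of_int k * t) * (u * B)" by (simp only: mult.assoc)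
    have "u * B \<noteq> 0" using uB by (auto simp: power2_eq_square)
    then show ?thesis unfolding l r[symmetric] by simp
  qed
  finally show ?thesis unfolding B_def D_def \<epsilon>_def .
qed

lemma common_eigenvector_riley_pair:
  fixes t u :: "'a::field"
  assumes "u = 0 \<or> (t - inverse t)^2 - u = 0"
  shows "common_eigenvector (matC t) (matD t u)"
  using assms
proof
  assume "u = 0"
  then show ?thesis unfolding common_eigenvector_def matC_def matD_def
    by (intro exI[of _ "(1, 0)"] exI[of _ t]) (simp add: pair_scale_def)
next
  assume \<kappa>: "(t - inverse t)^2 - u = 0"
  have "m2_mulv (matC t) (1, - (t - inverse t)) = pair_scale (inverse t) (1, - (t - inverse t))"
    unfolding matC_def by (simp add: pair_scale_def algebra_simps)
  moreover have "m2_mulv (matD t u) (1, - (t - inverse t)) = pair_scale t (1, - (t - inverse t))"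
    using \<kappa> unfolding matD_def by (simp add: pair_scale_def algebra_simps power2_eq_square)
  moreover have "(1::'a, - (t - inverse t)) \<noteq> (0, 0)" by simp
  ultimately show ?thesis unfolding common_eigenvector_def by blast
qed

lemma riley_pair_relations:
  fixes X Y :: "'a::field m2"
  assumes dX: "m2det X = 1" and dY: "m2det Y = 1" and ts: "t * s = 1"
    and tX: "m2tr X = t + s" and tY: "m2tr Y = t + s" and nc: "\<not> common_eigenvector X Y"
  defines "u \<equiv> m2tr X ^ 2 - 2 - m2tr (m2mul X Y)"
  shows "knot_relation p q X Y \<longleftrightarrow> knot_relation p q (matC t) (matD t u)"
    and "longitude_relation p q k X Y \<longleftrightarrow> longitude_relation p q k (matC t) (matD t u)"
    and "u \<noteq> 0" and "(t - inverse t)^2 - u \<noteq> 0"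
proof -
  have "u = t^2 + s^2 - m2tr (m2mul X Y)"
    unfolding u_def tX using ts by (simp add: power2_eq_square algebra_simps)
  then obtain H where H: "m2det H \<noteq> 0" "intertwines H (matC t) X" "intertwines H (matD t u) Y"
    using riley_normal_form[OF dX dY tX tY ts nc] by auto
  show "knot_relation p q X Y \<longleftrightarrow> knot_relation p q (matC t) (matD t u)"
    using knot_relation_intertwines[OF H] by simp
  show "longitude_relation p q k X Y \<longleftrightarrow> longitude_relation p q k (matC t) (matD t u)"
    using longitude_relation_intertwines[OF H] by simp
  have "\<not> common_eigenvector (matC t) (matD t u)"
    using common_eigenvector_intertwines[OF H] nc by blast
  then show "u \<noteq> 0" and "(t - inverse t)^2 - u \<noteq> 0"
    using common_eigenvector_riley_pair by blast+
qed

section \<open>Representations with a common eigenvector\<close>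

lemma upper_triangular_m2prod:
  "(\<And>i. i \<in> set xs \<Longrightarrow> m2_c (f i) = 0) \<Longrightarrow>
     m2_c (m2prod f xs) = 0 \<and> m2_a (m2prod f xs) = (\<Prod>i\<leftarrow>xs. m2_a (f i))"
proof (induction xs)
  case Nil
  then show ?case by (simp add: m2id_def)
next
  case (Cons x xs)
  moreover have "m2_c (f x) = 0" using Cons.prems by simp
  ultimately show ?case by (cases "f x"; cases "m2prod f xs") (simp add: m2prod_Cons)
qed

lemma upper_triangular_zpow:
  fixes A :: "'a::field m2"
  assumes "m2_c A = 0" and "m2det A = 1"
  shows "m2_c (m2zpow A k) = 0 \<and> m2_a (m2zpow A k) = m2_a A powi k"
proof -
  obtain a b d where A: "A = M2 a b 0 d" using assms(1) by (cases A) auto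
  have "a * d = 1" using assms(2) A by simp
  then show ?thesis using m2zpow_upper_triangular[of a d b k] A by auto
qed

lemma upper_triangular_wordW:
  fixes A B :: "'a::field m2"
  assumes "m2_c A = 0" "m2det A = 1" "m2_c B = 0" "m2det B = 1"
  shows "m2_c (wordW p q A B) = 0
    \<and> m2_a (wordW p q A B) = (\<Prod>i\<leftarrow>[1..p-1]. (if odd i then m2_a A else m2_a B) powi eps p q i)"
proof -
  have "m2_c (wfactor p q A B i) = 0
      \<and> m2_a (wfactor p q A B i) = (if odd i then m2_a A else m2_a B) powi eps p q i" for i
    using assms by (simp add: wfactor_def upper_triangular_zpow)
  then show ?thesis unfolding wordW_m2prod using upper_triangular_m2prod[of _ "wfactor p q A B"] by simp
qed

lemma sigma_eq_sum_list: "sigma p q = (\<Sum>i\<leftarrow>[1..p-1]. eps p q i)"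
  unfolding sigma_def by (simp add: sum_set_upto_conv_sum_list_int[symmetric])

lemma prod_list_power_int: "(a::'a::field) \<noteq> 0 \<Longrightarrow> (\<Prod>i\<leftarrow>xs. a powi f i) = a powi (\<Sum>i\<leftarrow>xs. f i)"
  by (induction xs) (simp_all add: power_int_add)

lemma upper_triangular_rep_diag:
  fixes X Y :: "'a::field m2"
  assumes tb: "two_bridge p q"
    and X: "m2_c X = 0" "m2det X = 1" and Y: "m2_c Y = 0" "m2det Y = 1"
    and knot: "knot_relation p q X Y" and lon: "longitude_relation p q k X Y"
  shows "m2_a Y = m2_a X \<and> m2_a X powi (2 * sigma p q + k) = 1"
proof -
  have a0: "m2_a A \<noteq> 0" if "m2_c A = 0" "m2det A = 1" for A :: "'a m2"
    using that by (cases A) auto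
  note a0 = a0[OF X] a0[OF Y]
  have ut1: "m2_c (m2mul A B) = 0" if "m2_c A = 0" "m2_c B = 0" for A B :: "'a m2"
    using that by (cases A; cases B) simp
  have ut2: "m2_a (m2mul A B) = m2_a A * m2_a B" if "m2_c A = 0" "m2_c B = 0" for A B :: "'a m2"
    using that by (cases A; cases B) simp
  define w where "w = wordW p q X Y"
  define r where "r = wordW p q Y X"
  have w: "m2_c w = 0" "m2_a w = (\<Prod>i\<leftarrow>[1..p-1]. (if odd i then m2_a X else m2_a Y) powi eps p q i)"
    using upper_triangular_wordW[OF X Y] unfolding w_def by simp_all
  have r: "m2_c r = 0" "m2_a r = (\<Prod>i\<leftarrow>[1..p-1]. (if odd i then m2_a Y else m2_a X) powi eps p q i)"
    using upper_triangular_wordW[OF Y X] unfolding r_def by simp_all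
  have "m2_a w \<noteq> 0" unfolding w(2) using a0 by (auto simp: prod_list_zero_iff split: if_splits)
  moreover have "m2_a w * m2_a X = m2_a Y * m2_a w"
    using arg_cong[OF knot, of m2_a] unfolding w_def[symmetric] ut2[OF w(1) X(1)] ut2[OF Y(1) w(1)] .
  ultimately have aY: "m2_a Y = m2_a X" by simp
  have sigma: "(\<Prod>i\<leftarrow>[1..p-1]. m2_a X powi eps p q i) = m2_a X powi sigma p q"
    unfolding sigma_eq_sum_list using a0(1) by (rule prod_list_power_int)
  have "m2_a r * m2_a w * m2_a (m2zpow X k) = 1"
    using arg_cong[OF lon, of m2_a] ut2[OF ut1[OF r(1) w(1)] upper_triangular_zpow[OF X, THEN conjunct1]]
      ut2[OF r(1) w(1)]
    unfolding wordWrev_eq_wordW_swap[OF tb] r_def[symmetric] w_def[symmetric] by (simp add: m2id_def)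
  then have "m2_a X powi sigma p q * m2_a X powi sigma p q * m2_a X powi k = 1"
    unfolding r(2) w(2) aY upper_triangular_zpow[OF X, THEN conjunct2] if_cancel sigma .
  then show ?thesis using aY a0 by (simp add: power_int_add[symmetric])
qed

lemma unipotent_wordW:
  fixes x y :: "'a::field"
  shows "wordW p q (M2 1 x 0 1) (M2 1 y 0 1)
    = M2 1 (\<Sum>i\<leftarrow>[1..p-1]. of_int (eps p q i) * (if odd i then x else y)) 0 1"
proof -
  have "m2prod (\<lambda>i. M2 1 (g i) 0 1) is = M2 1 (\<Sum>i\<leftarrow>is. g i) 0 (1::'a)" for g and "is" :: "int list"
    by (induction "is") (simp_all add: m2prod_Cons m2id_def algebra_simps)
  moreover have "wfactor p q (M2 1 x 0 1) (M2 1 y 0 1)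
      = (\<lambda>i. M2 1 (of_int (eps p q i) * (if odd i then x else y)) 0 1)"
    using m2zpow_upper_involutive_diag[of "1::'a"] by (auto simp: wfactor_def)
  ultimately show ?thesis unfolding wordW_m2prod by simp
qed

lemma unipotent_rep:
  fixes x y :: "'a::field"
  assumes tb: "two_bridge p q"
    and knot: "knot_relation p q (M2 1 x 0 1) (M2 1 y 0 1)"
    and lon: "longitude_relation p q k (M2 1 x 0 1) (M2 1 y 0 1)"
  shows "x = y \<and> of_int (2 * sigma p q + k) * x = 0"
proof -
  have "x = y" using knot unfolding unipotent_wordW by simp
  have "(\<Sum>i\<leftarrow>is. of_int (eps p q i) * x) = of_int (\<Sum>i\<leftarrow>is. eps p q i) * x" for "is"
    by (induction "is") (simp_all add: algebra_simps)
  then have W: "wordW p q (M2 1 x 0 1) (M2 1 x 0 1) = M2 1 (of_int (sigma p q) * x) 0 1"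
    unfolding unipotent_wordW sigma_eq_sum_list by simp
  have "M2 1 (of_int (sigma p q) * x + of_int (sigma p q) * x + of_int k * x) 0 1 = (m2id :: 'a m2)"
    using lon m2zpow_upper_involutive_diag[of "1::'a" x k]
    unfolding wordWrev_eq_wordW_swap[OF tb] \<open>x = y\<close>[symmetric] W
    by (simp add: algebra_simps)
  then show ?thesis using \<open>x = y\<close> by (simp add: m2id_def algebra_simps)
qed

lemma common_eigenvector_rep_trivial:
  fixes X Y :: "'a::field m2"
  assumes tb: "two_bridge p q" and n: "n = 1 \<or> n = -1"
    and dX: "m2det X = 1" and dY: "m2det Y = 1"
    and knot: "knot_relation p q X Y" and lon: "longitude_relation p q (n - 2 * sigma p q) X Y"
    and ce: "common_eigenvector X Y"
  shows "X = m2id \<and> Y = m2id"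
proof -
  obtain H X' Y' where H: "m2det H \<noteq> 0" "intertwines H X' X" "intertwines H Y' Y"
    and c: "m2_c X' = 0" "m2_c Y' = 0"
    using common_eigenvector_triangularize[OF ce] by blast
  have d: "m2det X' = 1" "m2det Y' = 1"
    using dX dY intertwines_m2det[OF H(1) H(2)] intertwines_m2det[OF H(1) H(3)] by simp_all
  have knot': "knot_relation p q X' Y'" and lon': "longitude_relation p q (n - 2 * sigma p q) X' Y'"
    using knot lon knot_relation_intertwines[OF H] longitude_relation_intertwines[OF H] by blast+
  have "m2_a Y' = m2_a X'" "m2_a X' powi n = 1"
    using upper_triangular_rep_diag[OF tb c(1) d(1) c(2) d(2) knot' lon'] by simp_all
  then have "m2_a X' = 1" "m2_a Y' = 1" using n by (auto simp: power_int_minus)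
  then obtain x y where XY': "X' = M2 1 x 0 1" "Y' = M2 1 y 0 1"
    using c d by (cases X'; cases Y') auto
  have "x = y" "of_int n * x = 0"
    using unipotent_rep[OF tb, of x y "n - 2 * sigma p q"] knot' lon' unfolding XY' by auto
  then have "X' = m2id" "Y' = m2id" using n XY' by (auto simp: m2id_def)
  then show ?thesis
    using H m2mul_cancel_right[OF H(1), of m2id] unfolding intertwines_def by auto
qed

abbreviation mapC :: "real m2 \<Rightarrow> complex m2" where
  "mapC \<equiv> map_m2 complex_of_real"

lemma mapC_mul: "mapC (m2mul A B) = m2mul (mapC A) (mapC B)"
  by (cases A; cases B) simp

lemma mapC_m2id [simp]: "mapC m2id = m2id"
  by (simp add: m2id_def)

lemma mapC_adj: "mapC (m2adj A) = m2adj (mapC A)"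
  by (cases A) simp

lemma mapC_pow: "mapC (m2pow A m) = m2pow (mapC A) m"
  by (induction m) (simp_all add: mapC_mul)

lemma mapC_zpow: "mapC (m2zpow A k) = m2zpow (mapC A) k"
  unfolding m2zpow_def by (simp add: mapC_pow mapC_adj)

lemma mapC_m2prod: "mapC (m2prod f xs) = m2prod (\<lambda>i. mapC (f i)) xs"
  by (induction xs) (simp_all add: m2prod_Cons mapC_mul)

lemma mapC_wfactor: "mapC (wfactor p q X Y i) = wfactor p q (mapC X) (mapC Y) i"
  unfolding wfactor_def by (simp add: mapC_zpow)

lemma mapC_wordW: "mapC (wordW p q X Y) = wordW p q (mapC X) (mapC Y)"
  unfolding wordW_m2prod by (simp add: mapC_m2prod mapC_wfactor)

lemma mapC_wordWrev: "mapC (wordWrev p q X Y) = wordWrev p q (mapC X) (mapC Y)"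
  unfolding wordWrev_m2prod by (simp add: mapC_m2prod mapC_wfactor)

lemma mapC_commutator: "mapC (m2commutator X Y) = m2commutator (mapC X) (mapC Y)"
  unfolding m2commutator_def by (simp add: mapC_mul mapC_adj)

lemma m2det_mapC: "m2det (mapC A) = complex_of_real (m2det A)"
  by (cases A) simp

lemma m2tr_mapC: "m2tr (mapC A) = complex_of_real (m2tr A)"
  by (cases A) simp

lemma mapC_inject: "mapC A = mapC B \<longleftrightarrow> A = B"
  by (cases A; cases B) simp

lemma knot_relation_mapC_iff: "knot_relation p q (mapC X) (mapC Y) \<longleftrightarrow> knot_relation p q X Y"
  by (simp only: mapC_wordW[symmetric] mapC_mul[symmetric] mapC_inject)

lemma longitude_relation_mapC_iff:
  "longitude_relation p q k (mapC X) (mapC Y) \<longleftrightarrow> longitude_relation p q k X Y"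
  by (simp only: mapC_wordW[symmetric] mapC_wordWrev[symmetric] mapC_zpow[symmetric]
      mapC_mul[symmetric] mapC_m2id[symmetric] mapC_inject)

lemma common_eigenvector_mapC:
  assumes "common_eigenvector X Y"
  shows "common_eigenvector (mapC X) (mapC Y)"
proof -
  obtain v1 v2 \<alpha> \<beta> where v: "(v1, v2) \<noteq> (0, 0)"
    "m2_mulv X (v1, v2) = pair_scale \<alpha> (v1, v2)" "m2_mulv Y (v1, v2) = pair_scale \<beta> (v1, v2)"
    using assms unfolding common_eigenvector_def by auto
  have "m2_mulv (mapC M) (of_real v1, of_real v2) = pair_scale (of_real \<gamma>) (of_real v1, of_real v2)"
    if "m2_mulv M (v1, v2) = pair_scale \<gamma> (v1, v2)" for M \<gamma>
    using that by (cases M) (simp add: pair_scale_def flip: of_real_mult of_real_add)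
  moreover have "(complex_of_real v1, complex_of_real v2) \<noteq> (0, 0)" using v(1) by simp
  ultimately show ?thesis using v unfolding common_eigenvector_def by blast
qed

lemma cis_diff_inverse_square_diff:
  "(cis \<theta> - inverse (cis \<theta>))^2 - complex_of_real u = - complex_of_real (u + 4 * (sin \<theta>)^2)"
  by (simp add: complex_eq_iff power2_eq_square)

lemma riley_pair_relations_cis:
  fixes X Y :: "real m2"
  assumes dX: "m2det X = 1" and dY: "m2det Y = 1"
    and tX: "m2tr X = 2 * cos \<theta>" and tY: "m2tr Y = 2 * cos \<theta>"
    and nc: "\<not> common_eigenvector (mapC X) (mapC Y)"
  defines "u \<equiv> m2tr X ^ 2 - 2 - m2tr (m2mul X Y)"
  shows "knot_relation p q X Y \<longleftrightarrow> knot_relation p q (matC (cis \<theta>)) (matD (cis \<theta>) (of_real u))"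
    and "longitude_relation p q k X Y
           \<longleftrightarrow> longitude_relation p q k (matC (cis \<theta>)) (matD (cis \<theta>) (of_real u))"
    and "u \<noteq> 0" and "u + 4 * (sin \<theta>)^2 \<noteq> 0"
proof -
  have dXc: "m2det (mapC X) = 1" "m2det (mapC Y) = 1" using dX dY by (simp_all add: m2det_mapC)
  have ts: "cis \<theta> * cis (- \<theta>) = 1" by (simp add: cis_mult)
  have "cis \<theta> + cis (- \<theta>) = complex_of_real (2 * cos \<theta>)" by (simp add: complex_eq_iff)
  then have tXc: "m2tr (mapC X) = cis \<theta> + cis (- \<theta>)" "m2tr (mapC Y) = cis \<theta> + cis (- \<theta>)"
    using tX tY by (simp_all add: m2tr_mapC)
  have "m2tr (mapC X) ^ 2 - 2 - m2tr (m2mul (mapC X) (mapC Y)) = of_real u"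
    unfolding u_def by (simp flip: mapC_mul add: m2tr_mapC)
  note riley = riley_pair_relations[OF dXc ts tXc nc, unfolded this]
  show "knot_relation p q X Y \<longleftrightarrow> knot_relation p q (matC (cis \<theta>)) (matD (cis \<theta>) (of_real u))"
    using riley(1) knot_relation_mapC_iff by blast
  show "longitude_relation p q k X Y
      \<longleftrightarrow> longitude_relation p q k (matC (cis \<theta>)) (matD (cis \<theta>) (of_real u))"
    using riley(2) longitude_relation_mapC_iff by blast
  show "u \<noteq> 0" using riley(3) by simp
  show "u + 4 * (sin \<theta>)^2 \<noteq> 0"
    using riley(4) unfolding cis_diff_inverse_square_diff neg_equal_0_iff_equal of_real_eq_0_iff .
qed

section \<open>Solutions give representations\<close>

lemma nontrivial_rep_if_real_sol:
  assumes tb: "two_bridge p q" and "real_sol p q n"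
  shows "has_nontrivial_SL2R_rep p q n"
proof -
  obtain t u :: real where t: "t \<notin> {-1, 0, 1}"
    and knot: "Apq p q t u = (t - inverse t) * Bpq p q t u"
    and lon: "t powi (n - 2 * sigma p q) * ((t - inverse t)^2 - u) * (Bpq p q t u)^2 = 1"
    using assms(2) unfolding real_sol_def by blast
  have t0: "t \<noteq> 0" and \<delta>: "t - inverse t \<noteq> 0" using t diff_inverse_eq_0_iff[of t] by auto
  have \<kappa>: "(t - inverse t)^2 - u \<noteq> 0" using lon by auto
  have "surgery_rep p q n (matC t) (matD t u)"
    unfolding surgery_rep_def
    using m2det_matC[OF t0] m2det_matD[OF t0] knot_relation_riley_iff[OF tb] knot
      longitude_relation_riley_iff[OF tb \<delta> \<kappa> knot] lon by blast
  moreover have "matC t \<noteq> m2id" unfolding matC_def m2id_def by simp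
  ultimately show ?thesis unfolding has_nontrivial_SL2R_rep_def by blast
qed

lemma nontrivial_rep_if_minus_one_sol:
  assumes tb: "two_bridge p q" and "minus_one_sol p q n"
  shows "has_nontrivial_SL2R_rep p q n"
proof -
  obtain u :: real where "odd n" and A: "Apq p q (-1) u = 0"
    and lon: "- of_int (n - 2 * sigma p q) * u * Bpq p q (-1) u = 2 * Dpq p q (-1) u"
    using assms(2) unfolding minus_one_sol_def by blast
  have "knot_relation p q (matC (-1)) (matD (-1) u)"
    using knot_relation_riley_iff[OF tb, of "-1" u] A by simp
  moreover have "longitude_relation p q (n - 2 * sigma p q) (matC (-1)) (matD (-1) u)"
  proof -
    have "(-1) powi (n - 2 * sigma p q) = (-1 :: real)"
      using \<open>odd n\<close> by (simp add: power_int_minus_left)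
    moreover have "of_int (n - 2 * sigma p q) * (-1) * u * Bpq p q (-1) u = 2 * Dpq p q (-1) u"
      using lon by simp
    ultimately show ?thesis
      using longitude_relation_riley_involution[OF tb _ A, of "n - 2 * sigma p q"] by simp
  qed
  ultimately have "surgery_rep p q n (matC (-1)) (matD (-1) u)"
    unfolding surgery_rep_def by (simp add: m2det_matC m2det_matD)
  moreover have "matC (-1::real) \<noteq> m2id" unfolding matC_def m2id_def by simp
  ultimately show ?thesis unfolding has_nontrivial_SL2R_rep_def by blast
qed

lemma m2tr_commutator_cos:
  fixes X Y :: "real m2"
  assumes "m2det X = 1" "m2det Y = 1" "m2tr X = 2 * cos \<theta>" "m2tr Y = 2 * cos \<theta>"
  defines "u \<equiv> m2tr X ^ 2 - 2 - m2tr (m2mul X Y)"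
  shows "m2tr (m2commutator X Y) = 2 + u * (u + 4 * (sin \<theta>)^2)"
proof -
  have "m2tr X ^ 2 = 4 * (cos \<theta>)^2" using assms(3) by (simp add: power_mult_distrib)
  then have "2 - m2tr (m2mul X Y) = u + 4 * (sin \<theta>)^2"
    using sin_cos_squared_add[of \<theta>] unfolding u_def by linarith
  then show ?thesis using m2tr_commutator_equal_traces[OF assms(1,2)] assms(3,4) unfolding u_def by simp
qed

text \<open>X is the rotation by \<theta> and Y has the same trace and the prescribed tr XY; the quadratic
  equation for the off-diagonal entries of Y has real roots exactly in the admissible range of u.\<close>

lemma real_pair_with_traces:
  fixes \<theta> u :: real
  assumes sn0: "sin \<theta> \<noteq> 0" and range: "u < -4 * (sin \<theta>)^2 \<or> 0 < u"
  obtains X Y :: "real m2" where "m2det X = 1" "m2det Y = 1"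
    "m2tr X = 2 * cos \<theta>" "m2tr Y = 2 * cos \<theta>" "m2tr X ^ 2 - 2 - m2tr (m2mul X Y) = u"
    "\<not> common_eigenvector (mapC X) (mapC Y)"
proof -
  define c sn where "c = cos \<theta>" and "sn = sin \<theta>"
  have cs1: "c^2 + sn^2 = 1" unfolding c_def sn_def by simp
  have pos: "u * (u + 4 * sn^2) > 0"
  proof (cases "0 < u")
    case True
    then show ?thesis by (intro mult_pos_pos add_pos_nonneg) auto
  next
    case False
    then have "u < 0" "u + 4 * sn^2 < 0"
      using range zero_le_power2[of sn] unfolding sn_def by linarith+
    then show ?thesis by (rule mult_neg_neg)
  qed
  define D0 where "D0 = -2 * sn - u / sn"
  have "D0^2 - 4 * sn^2 = u * (u + 4 * sn^2) / sn^2"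
    using sn0 unfolding D0_def sn_def by (simp add: field_simps power2_eq_square)
  with pos have disc: "D0^2 - 4 * sn^2 > 0" using sn0 unfolding sn_def by simp
  define R where "R = sqrt (D0^2 - 4 * sn^2)"
  have R2: "R^2 = D0^2 - 4 * sn^2" unfolding R_def using disc by simp
  define y2 y3 where "y2 = (D0 + R) / 2" and "y3 = (R - D0) / 2"
  define X Y where "X = M2 c (-sn) sn c" and "Y = M2 c y2 y3 c"
  have "y2 * y3 = - (sn^2)" "y2 - y3 = D0"
    unfolding y2_def y3_def using R2 by (simp_all add: field_simps power2_eq_square)
  moreover have "sn * D0 = -2 * sn^2 - u"
    unfolding D0_def using sn0 unfolding sn_def by (simp add: field_simps power2_eq_square)
  ultimately have XY: "m2det X = 1" "m2det Y = 1" "m2tr X = 2 * cos \<theta>" "m2tr Y = 2 * cos \<theta>"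
    "m2tr X ^ 2 - 2 - m2tr (m2mul X Y) = u"
    using cs1 unfolding X_def Y_def by (simp_all add: c_def algebra_simps power2_eq_square)
  then have "m2tr (m2commutator X Y) = 2 + u * (u + 4 * sn^2)"
    using m2tr_commutator_cos[of X Y \<theta>] unfolding sn_def by simp
  then have "m2tr (m2commutator X Y) \<noteq> 2" using pos by linarith
  then have "m2tr (m2commutator (mapC X) (mapC Y)) \<noteq> 2"
    unfolding mapC_commutator[symmetric] m2tr_mapC by (metis of_real_numeral of_real_eq_iff)
  then have "\<not> common_eigenvector (mapC X) (mapC Y)"
    using m2tr_commutator_common_eigenvector XY(1,2) by (metis m2det_mapC of_real_1)
  with XY show ?thesis by (rule that)
qed

lemma nontrivial_rep_if_circle_sol:
  assumes tb: "two_bridge p q" and "circle_sol p q n"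
  shows "has_nontrivial_SL2R_rep p q n"
proof -
  define k where "k = n - 2 * sigma p q"
  obtain \<theta> u :: real where t1: "cis \<theta> \<noteq> 1" "cis \<theta> \<noteq> -1"
    and range: "u < -4 * (sin \<theta>)^2 \<or> 0 < u"
    and knot: "Apq p q (cis \<theta>) (of_real u) = (cis \<theta> - inverse (cis \<theta>)) * Bpq p q (cis \<theta>) (of_real u)"
    and lon: "cis \<theta> powi k * ((cis \<theta> - inverse (cis \<theta>))^2 - of_real u) * (Bpq p q (cis \<theta>) (of_real u))^2 = 1"
    using assms(2) unfolding circle_sol_def Let_def k_def by blast
  have sn0: "sin \<theta> \<noteq> 0"
  proof
    assume "sin \<theta> = 0"
    then have "cos \<theta> = 1 \<or> cos \<theta> = -1" using sin_cos_squared_add[of \<theta>] by (simp add: power2_eq_1_iff)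
    then show False using t1 \<open>sin \<theta> = 0\<close> by (auto simp: complex_eq_iff)
  qed
  obtain X Y where dX: "m2det X = 1" and dY: "m2det Y = 1"
    and tX: "m2tr X = 2 * cos \<theta>" and tY: "m2tr Y = 2 * cos \<theta>"
    and u: "m2tr X ^ 2 - 2 - m2tr (m2mul X Y) = u" and nc: "\<not> common_eigenvector (mapC X) (mapC Y)"
    using real_pair_with_traces[OF sn0 range] by blast
  define t where "t = cis \<theta>"
  have \<delta>: "t - inverse t \<noteq> 0" using t1 diff_inverse_eq_0_iff[of t] unfolding t_def by auto
  have \<kappa>: "(t - inverse t)^2 - of_real u \<noteq> 0" using lon unfolding t_def by auto
  note riley = riley_pair_relations_cis[OF dX dY tX tY nc, unfolded u, folded t_def]
  have "knot_relation p q X Y"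
    using riley(1) knot_relation_riley_iff[OF tb, of t "of_real u"] knot unfolding t_def by blast
  moreover have "longitude_relation p q k X Y"
    using riley(2) longitude_relation_riley_iff[OF tb \<delta> \<kappa>, of k] knot lon unfolding t_def by blast
  ultimately have "surgery_rep p q n X Y" unfolding surgery_rep_def k_def using dX dY by blast
  moreover have "X \<noteq> m2id"
  proof
    assume "X = m2id"
    then have "cos \<theta> = 1" using tX by (simp add: m2id_def)
    then show False using sn0 sin_cos_squared_add[of \<theta>] by simp
  qed
  ultimately show ?thesis unfolding has_nontrivial_SL2R_rep_def by blast
qed

section \<open>Representations give solutions\<close>

lemma real_sol_if_hyperbolic:
  fixes X Y :: "real m2"
  assumes tb: "two_bridge p q" and rep: "surgery_rep p q n X Y"
    and nc: "\<not> common_eigenvector X Y" and hyp: "4 < m2tr X ^ 2"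
  shows "real_sol p q n"
proof -
  define k \<tau> where "k = n - 2 * sigma p q" and "\<tau> = m2tr X"
  have dX: "m2det X = 1" and dY: "m2det Y = 1" and knot: "knot_relation p q X Y"
    and lon: "longitude_relation p q k X Y"
    using rep unfolding surgery_rep_def k_def by auto
  define r where "r = sqrt (\<tau>^2 - 4)"
  have r2: "r^2 = \<tau>^2 - 4" unfolding r_def using hyp \<tau>_def by simp
  define t s where "t = (\<tau> + r) / 2" and "s = (\<tau> - r) / 2"
  have ts: "t * s = 1" and tsum: "m2tr X = t + s" "m2tr Y = t + s"
    using r2 knot_relation_m2tr[OF dX dY knot]
    unfolding t_def s_def \<tau>_def by (simp_all add: field_simps power2_eq_square)
  have "t \<noteq> 0" "t \<noteq> 1" "t \<noteq> -1"
    using ts hyp tsum(1) by (auto simp: power2_eq_square)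
  then have \<delta>: "t - inverse t \<noteq> 0" using diff_inverse_eq_0_iff by blast
  define u where "u = m2tr X ^ 2 - 2 - m2tr (m2mul X Y)"
  note riley = riley_pair_relations[OF dX dY ts tsum nc, folded u_def]
  have knot': "Apq p q t u = (t - inverse t) * Bpq p q t u"
    using riley(1) knot knot_relation_riley_iff[OF tb] by blast
  then have "t powi k * ((t - inverse t)^2 - u) * (Bpq p q t u)^2 = 1"
    using riley(2) lon longitude_relation_riley_iff[OF tb \<delta> riley(4) knot'] by blast
  then show ?thesis
    using knot' \<open>t \<noteq> 0\<close> \<open>t \<noteq> 1\<close> \<open>t \<noteq> -1\<close> unfolding real_sol_def k_def by blast
qed

lemma circle_sol_if_elliptic:
  fixes X Y :: "real m2"
  assumes tb: "two_bridge p q" and rep: "surgery_rep p q n X Y"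
    and nc: "\<not> common_eigenvector (mapC X) (mapC Y)" and ell: "m2tr X ^ 2 < 4"
  shows "circle_sol p q n"
proof -
  define k where "k = n - 2 * sigma p q"
  have dX: "m2det X = 1" and dY: "m2det Y = 1" and knot: "knot_relation p q X Y"
    and lon: "longitude_relation p q k X Y"
    using rep unfolding surgery_rep_def k_def by auto
  have "\<bar>m2tr X\<bar>^2 < 2^2" using ell by simp
  then have "\<bar>m2tr X\<bar> < 2" by (rule power_less_imp_less_base) simp
  then have bound: "\<bar>m2tr X / 2\<bar> < 1" by simp
  define \<theta> where "\<theta> = arccos (m2tr X / 2)"
  have tX: "m2tr X = 2 * cos \<theta>" unfolding \<theta>_def using bound by simp
  have "sin \<theta> \<noteq> 0" unfolding \<theta>_def using bound by (simp add: sin_arccos_nonzero)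
  have tY: "m2tr Y = 2 * cos \<theta>" using knot_relation_m2tr[OF dX dY knot] tX by simp
  define u where "u = m2tr X ^ 2 - 2 - m2tr (m2mul X Y)"
  note riley = riley_pair_relations_cis[OF dX dY tX tY nc, folded u_def]
  define t where "t = cis \<theta>"
  have t1: "t \<noteq> 1" "t \<noteq> -1" using \<open>sin \<theta> \<noteq> 0\<close> unfolding t_def by (auto simp: complex_eq_iff)
  then have \<delta>: "t - inverse t \<noteq> 0" using diff_inverse_eq_0_iff[of t] unfolding t_def by auto
  have \<kappa>: "(t - inverse t)^2 - of_real u \<noteq> 0"
    using riley(4) unfolding t_def cis_diff_inverse_square_diff neg_equal_0_iff_equal of_real_eq_0_iff .
  have knot': "Apq p q t (of_real u) = (t - inverse t) * Bpq p q t (of_real u)"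
    using riley(1) knot knot_relation_riley_iff[OF tb] unfolding t_def by blast
  then have lon': "t powi k * ((t - inverse t)^2 - of_real u) * (Bpq p q t (of_real u))^2 = 1"
    using riley(2) lon longitude_relation_riley_iff[OF tb \<delta> \<kappa> knot'] unfolding t_def by blast
  have "0 \<le> u * (u + 4 * (sin \<theta>)^2)"
    using m2tr_commutator_cos[OF dX dY tX tY] m2tr_commutator_ge_two_if_elliptic[OF dX dY ell]
    unfolding u_def by simp
  with riley(3,4) have "u < -4 * (sin \<theta>)^2 \<or> 0 < u"
    by (cases "0 < u") (auto simp: zero_le_mult_iff)
  then show ?thesis
    using t1 knot' lon' unfolding circle_sol_def Let_def t_def k_def by blast
qed

lemma minus_one_sol_if_parabolic:
  fixes X Y :: "real m2"
  assumes tb: "two_bridge p q" and rep: "surgery_rep p q n X Y"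
    and nc: "\<not> common_eigenvector X Y" and par: "m2tr X ^ 2 = 4"
  shows "minus_one_sol p q n"
proof -
  define k where "k = n - 2 * sigma p q"
  have dX: "m2det X = 1" and dY: "m2det Y = 1" and knot: "knot_relation p q X Y"
    and lon: "longitude_relation p q k X Y"
    using rep unfolding surgery_rep_def k_def by auto
  define t where "t = m2tr X / 2"
  have tt: "t * t = 1" using par unfolding t_def by (simp add: power2_eq_square)
  have tsum: "m2tr X = t + t" "m2tr Y = t + t"
    using knot_relation_m2tr[OF dX dY knot] unfolding t_def by simp_all
  define u where "u = m2tr X ^ 2 - 2 - m2tr (m2mul X Y)"
  note riley = riley_pair_relations[OF dX dY tt tsum nc, folded u_def]
  have "inverse t = t" using tt by (simp add: inverse_unique)
  then have A: "Apq p q t u = 0"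
    using riley(1) knot knot_relation_riley_iff[OF tb, of t u] by simp
  then have "t powi k = -1" and D: "of_int k * t * u * Bpq p q t u = 2 * Dpq p q t u"
    using riley(2) lon longitude_relation_riley_involution[OF tb tt A] by blast+
  moreover have "t = 1 \<or> t = -1" using tt by (metis square_eq_1_iff mult_1 power2_eq_square)
  ultimately have "t = -1" and "odd k"
    by (auto simp: power_int_minus_left split: if_splits)
  then show ?thesis
    using A D unfolding minus_one_sol_def k_def by auto
qed

lemma sol_if_nontrivial_rep:
  assumes tb: "two_bridge p q" and n: "n = 1 \<or> n = -1" and "has_nontrivial_SL2R_rep p q n"
  shows "real_sol p q n \<or> circle_sol p q n \<or> minus_one_sol p q n"
proof -
  obtain X Y where rep: "surgery_rep p q n X Y" and nt: "X \<noteq> m2id \<or> Y \<noteq> m2id"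
    using assms(3) unfolding has_nontrivial_SL2R_rep_def by blast
  have ncC: "\<not> common_eigenvector (mapC X) (mapC Y)"
  proof
    assume "common_eigenvector (mapC X) (mapC Y)"
    then have "mapC X = m2id \<and> mapC Y = m2id"
      using rep common_eigenvector_rep_trivial[OF tb n, of "mapC X" "mapC Y"]
      unfolding surgery_rep_def knot_relation_mapC_iff longitude_relation_mapC_iff
      by (simp add: m2det_mapC)
    then show False using nt mapC_inject mapC_m2id by metis
  qed
  then have nc: "\<not> common_eigenvector X Y" using common_eigenvector_mapC by blast
  consider "4 < m2tr X ^ 2" | "m2tr X ^ 2 < 4" | "m2tr X ^ 2 = 4" by linarith
  then show ?thesis
    using real_sol_if_hyperbolic[OF tb rep nc] circle_sol_if_elliptic[OF tb rep ncC]
      minus_one_sol_if_parabolic[OF tb rep nc] by cases blast+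
qed

theorem mainTheorem3:
  fixes p q n :: int
  assumes "two_bridge p q"
  shows "(real_sol p q n \<or> circle_sol p q n \<or> minus_one_sol p q n
            \<longrightarrow> has_nontrivial_SL2R_rep p q n)
       \<and> ((n = 1 \<or> n = -1) \<longrightarrow>
            (has_nontrivial_SL2R_rep p q n \<longleftrightarrow>
               (real_sol p q n \<or> circle_sol p q n \<or> minus_one_sol p q n)))"
  using nontrivial_rep_if_real_sol[OF assms] nontrivial_rep_if_circle_sol[OF assms]
    nontrivial_rep_if_minus_one_sol[OF assms] sol_if_nontrivial_rep[OF assms] by blast
end
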